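(* Let $f$ be $L$-smooth, bounded below by $f^*$, with unbiased stochastic gradients of variance at most $\sigma^2$ (see context). Consider Cycle SGD with $n$ workers and group size $s$ (see context) and its main branch $\{x^k\}_{k\ge0}$. With step size $\gamma=\min\{\frac{s}{4n^2L},\frac{\varepsilon}{4\sigma^2L}\}$ and $\Delta=f(x^0)-f^*$, we have $\frac1K\sum_{k=0}^{K-1}\mathbb{E}[\|\nabla f(x^k)\|^2]\le\varepsilon$ for all $K\ge\frac{8n^2L\Delta}{s\varepsilon}+\frac{8\sigma^2L\Delta}{\varepsilon^2}$.
   Context: Assumptions: $f:\mathbb{R}^d\to\mathbb{R}$ differentiable with $L$-Lipschitz gradient; $f\ge f^*$; stochastic gradients $\nabla f(x;\xi)$, $\xi\sim\mathcal{D}_\xi$, unbiased with variance at most $\sigma^2$. Cycle SGD: workers are partitioned into groups $G_1=\{1,\dots,s\},G_2=\{s+1,\dots,2s\},\dots,G_{\lceil n/s\rceil}=\{(\lceil n/s\rceil-1)s+1,\dots,n\}$. Initially every worker $i$ has $z^0_i=w^0$, $M_i=0$, and the server model is $w^0$, $r=0$. The method repeats forever: for $g=1,\dots,\lceil n/s\rceil$: every worker $i\in[n]$ performs one local step $z^{M_i+1}_i=z^{M_i}_i-\gamma\nabla f(z^{M_i}_i;\eta^{M_i}_i)$ with fresh i.i.d. $\eta^{M_i}_i\sim\mathcal{D}_\xi$ and increments $M_i$; then the server sets $w^{r+1}=w^r-\gamma\sum_{i\in G_g}\sum_{j=0}^{M_i-1}\nabla f(z^j_i;\eta^j_i)$,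 each worker $i\in G_g$ resets $z^0_i=w^{r+1}$, $M_i=0$, and $r\leftarrow r+1$. Main branch: $x^0=w^0$, and at each server update the gradients sent by the group are applied one at a time to the current head of the branch (workers of the group in increasing index, each worker's gradients in order $j=0,\dots,M_i-1$), so the head after the $r$-th update equals $w^r$. *)

theory Defs
  imports "HOL-Probability.Probability"
begin

text \<open>Workers are indexed 0-based: worker i (i < n) is worker i+1 of the paper.
  Group number (0-based) k consists of the workers i < n with i div s = k, i.e. paper group
  G_(k+1).\<close>

definition num_groups :: "nat \<Rightarrow> nat \<Rightarrow> nat" where
  "num_groups n s = nat \<lceil>real n / real s\<rceil>"

text \<open>Worker i belongs to the group that is served in inner iteration t (t = 0,1,2,...,
  the t-th server update overall; group index cycles t mod ceiling(n/s)).\<close>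
definition in_group :: "nat \<Rightarrow> nat \<Rightarrow> nat \<Rightarrow> nat \<Rightarrow> bool" where
  "in_group n s t i \<longleftrightarrow> i < n \<and> i div s = t mod num_groups n s"

text \<open>State after t server updates (for a fixed realisation omega of the sample sequence):
  (per worker: current local iterate z^(M_i)_i and the list of stochastic gradients
   computed since its last reset, in order j = 0..M_i-1;
   the server model w^t;
   the list of all gradients applied to the main branch so far, in application order).
  In iteration t, worker i uses the sample omega (t * n + i); these indices are pairwise
  distinct, so under the product measure the samples are fresh i.i.d.\<close>
fun cyc_state :: "real \<Rightarrow> ('a::real_normed_vector \<Rightarrow> 'b \<Rightarrow> 'a) \<Rightarrow> nat \<Rightarrow> nat \<Rightarrow> 'a
    \<Rightarrow> (nat \<Rightarrow> 'b) \<Rightarrow> nat \<Rightarrow> (nat \<Rightarrow> 'a \<times> 'a list) \<times> 'a \<times> 'a list" where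
  "cyc_state \<gamma> G n s w0 \<omega> 0 = ((\<lambda>i. (w0, [])), w0, [])"
| "cyc_state \<gamma> G n s w0 \<omega> (Suc t) =
     (let (Z, w, app) = cyc_state \<gamma> G n s w0 \<omega> t;
          Z1 = (\<lambda>i. let (z, gs) = Z i; g = G z (\<omega> (t * n + i))
                     in (z - \<gamma> *\<^sub>R g, gs @ [g]));
          sent = concat (map (\<lambda>i. snd (Z1 i)) (filter (in_group n s t) [0..<n]));
          w' = w - \<gamma> *\<^sub>R sum_list sent;
          Z2 = (\<lambda>i. if in_group n s t i then (w', []) else Z1 i)
      in (Z2, w', app @ sent))"

text \<open>After k+1 server updates at
  least k+1 gradients have been applied (each group is nonempty and each of its workers
  sends at least one gradient), and the applied list only grows by appending.\<close>
definition cyc_grad_seq :: "real \<Rightarrow> ('a::real_normed_vector \<Rightarrow> 'b \<Rightarrow> 'a) \<Rightarrow> nat \<Rightarrow> nat \<Rightarrow> 'a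
    \<Rightarrow> (nat \<Rightarrow> 'b) \<Rightarrow> nat \<Rightarrow> 'a" where
  "cyc_grad_seq \<gamma> G n s w0 \<omega> k = snd (snd (cyc_state \<gamma> G n s w0 \<omega> (Suc k))) ! k"

fun main_branch :: "real \<Rightarrow> ('a::real_normed_vector \<Rightarrow> 'b \<Rightarrow> 'a) \<Rightarrow> nat \<Rightarrow> nat \<Rightarrow> 'a
    \<Rightarrow> (nat \<Rightarrow> 'b) \<Rightarrow> nat \<Rightarrow> 'a" where
  "main_branch \<gamma> G n s w0 \<omega> 0 = w0"
| "main_branch \<gamma> G n s w0 \<omega> (Suc k) =
     main_branch \<gamma> G n s w0 \<omega> k - \<gamma> *\<^sub>R cyc_grad_seq \<gamma> G n s w0 \<omega> k"

text \<open>Step size gamma = min{s/(4 n^2 L), eps/(4 sigma^2 L)}, with the usual convention that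
  the second term is +infinity when sigma = 0.\<close>
definition cycle_stepsize :: "nat \<Rightarrow> nat \<Rightarrow> real \<Rightarrow> real \<Rightarrow> real \<Rightarrow> real" where
  "cycle_stepsize n s L \<sigma> \<epsilon> =
     (if \<sigma>\<^sup>2 = 0 then real s / (4 * real n ^ 2 * L)
      else min (real s / (4 * real n ^ 2 * L)) (\<epsilon> / (4 * \<sigma>\<^sup>2 * L)))"

end

theory Submission
  imports Defs
begin

(* Seen from its main branch, Cycle SGD is delayed SGD: the k-th applied gradient is a fresh
   stochastic gradient evaluated at z_k = x^(a k) + (x^k - x^(b k)), the model its worker was
   last reset to plus the worker's own steps since then.  Here a k <= b k <= k and
   k - a k < R = ceil(n/s) * n: between a reset and the next send of a worker every other group
   is served at most once, and every worker sends at most ceil(n/s) gradients at a time.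

   For delayed SGD, smoothness bounds the expected decrease of f along the main branch up to
   the gap E|grad f(x^k) - grad f(z_k)|^2 <= L^2 gamma^2 E|sum of the gradients in the delay
   window|^2.  The samples are fresh, so the noise terms in that window are orthogonal and
   contribute at most R sigma^2; and every index lies in at most R windows.  With the step size
   chosen, summing the descent inequality over k absorbs all delay terms into the left-hand side
   and leaves gamma c (sum_k E|grad f(x^k)|^2) <= f(x^0) - f* + K L gamma^2 sigma^2, which the
   lower bound on K turns into the claim. *)

section \<open>Smooth functions\<close>

lemma smooth_descent:
  fixes f :: "'a::real_inner \<Rightarrow> real" and gf :: "'a \<Rightarrow> 'a"
  assumes grad: "\<And>x. (f has_derivative (\<lambda>h. gf x \<bullet> h)) (at x)"
    and lip: "\<And>x y. norm (gf x - gf y) \<le> L * norm (x - y)"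
  shows "f y \<le> f x + gf x \<bullet> (y - x) + L / 2 * (norm (y - x))\<^sup>2"
proof -
  define h where "h = y - x"
  define \<psi> where "\<psi> t = f (x + t *\<^sub>R h) - t * (gf x \<bullet> h) - L / 2 * t\<^sup>2 * (norm h)\<^sup>2" for t :: real
  have \<psi>_deriv: "DERIV \<psi> t :> (gf (x + t *\<^sub>R h) - gf x) \<bullet> h - L * t * (norm h)\<^sup>2" for t
  proof -
    have "((\<lambda>t. f (x + t *\<^sub>R h)) has_derivative (\<lambda>dt. gf (x + t *\<^sub>R h) \<bullet> (dt *\<^sub>R h))) (at t)"
      by (rule has_derivative_compose[OF _ grad]) (auto intro!: derivative_eq_intros)
    then have "DERIV (\<lambda>t. f (x + t *\<^sub>R h)) t :> gf (x + t *\<^sub>R h) \<bullet> h"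
      by (rule has_derivative_imp_has_field_derivative) (simp add: mult.commute)
    then show ?thesis
      unfolding \<psi>_def by (auto intro!: derivative_eq_intros simp: inner_diff_left)
  qed
  have \<psi>_deriv_nonpos: "(gf (x + t *\<^sub>R h) - gf x) \<bullet> h - L * t * (norm h)\<^sup>2 \<le> 0" if "0 \<le> t" for t
  proof -
    have "(gf (x + t *\<^sub>R h) - gf x) \<bullet> h \<le> norm (gf (x + t *\<^sub>R h) - gf x) * norm h"
      by (rule norm_cauchy_schwarz)
    also have "\<dots> \<le> L * norm (t *\<^sub>R h) * norm h"
      using lip[of "x + t *\<^sub>R h" x] by (simp add: mult_right_mono)
    also have "\<dots> = L * t * (norm h)\<^sup>2"
      using that by (simp add: power2_eq_square)
    finally show ?thesis by simp
  qed
  have "\<psi> 1 \<le> \<psi> 0"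
  proof (rule DERIV_nonpos_imp_nonincreasing[of 0 1 \<psi>])
    fix t :: real assume "0 \<le> t" "t \<le> 1"
    then show "\<exists>y. DERIV \<psi> t :> y \<and> y \<le> 0" using \<psi>_deriv \<psi>_deriv_nonpos by blast
  qed simp
  then show ?thesis unfolding \<psi>_def h_def by simp
qed

lemma lipschitz_constant_nonneg:
  fixes g :: "'a::euclidean_space \<Rightarrow> 'b::real_normed_vector"
  assumes "\<And>x y. norm (g x - g y) \<le> L * norm (x - y)"
  shows "0 \<le> L"
proof -
  obtain b :: 'a where "b \<in> Basis" using nonempty_Basis by blast
  then have "0 < norm b" by (simp add: norm_Basis)
  moreover have "0 \<le> L * norm (b - 0)" using assms[of b 0] norm_ge_zero order_trans by blast
  ultimately show ?thesis by (simp add: zero_le_mult_iff)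
qed

lemma norm_grad_sq_le:
  fixes f :: "'a::real_inner \<Rightarrow> real" and gf :: "'a \<Rightarrow> 'a"
  assumes grad: "\<And>x. (f has_derivative (\<lambda>h. gf x \<bullet> h)) (at x)"
    and lip: "\<And>x y. norm (gf x - gf y) \<le> L * norm (x - y)"
    and lower: "\<And>x. fstar \<le> f x" and L: "0 \<le> L"
  shows "(norm (gf x))\<^sup>2 \<le> 2 * L * (f x - fstar)"
proof -
  \<comment> \<open>descending with a step \<open>1 / L'\<close> for every \<open>L' > L\<close> also covers \<open>L = 0\<close>\<close>
  have bound: "(norm (gf x))\<^sup>2 \<le> 2 * L' * (f x - fstar)" if "L \<le> L'" "0 < L'" for L'
  proof -
    have lip': "norm (gf y - gf z) \<le> L' * norm (y - z)" for y z
      using lip[of y z] that(1) by (meson mult_right_mono norm_ge_zero order_trans)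
    let ?y = "x - (1 / L') *\<^sub>R gf x"
    have "fstar \<le> f ?y" by (rule lower)
    also have "\<dots> \<le> f x + gf x \<bullet> (?y - x) + L' / 2 * (norm (?y - x))\<^sup>2"
      by (rule smooth_descent[OF grad lip'])
    also have "\<dots> = f x - (norm (gf x))\<^sup>2 / (2 * L')"
      using that(2) by (simp add: power2_eq_square field_simps flip: power2_norm_eq_inner)
    finally show ?thesis using that(2) by (simp add: field_simps)
  qed
  have "(norm (gf x))\<^sup>2 \<le> 2 * L * (f x - fstar) + \<epsilon>" if "0 < \<epsilon>" for \<epsilon>
  proof -
    define \<delta> where "\<delta> = \<epsilon> / (2 * (f x - fstar + 1))"
    have "0 < \<delta>" using that lower[of x] by (simp add: \<delta>_def)
    have "2 * \<delta> * (f x - fstar) \<le> \<epsilon>"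
      using that lower[of x] by (simp add: \<delta>_def field_simps)
    then show ?thesis
      using bound[of "L + \<delta>"] \<open>0 < \<delta>\<close> L by (simp add: algebra_simps)
  qed
  then show ?thesis by (rule field_le_epsilon)
qed

lemma neg_inner_le_norms:
  fixes x y :: "'a::real_inner"
  assumes "d < e" and c: "c = e - (e - 1/2)\<^sup>2 / (e - d)"
  shows "- (x \<bullet> y) \<le> - c * (norm x)\<^sup>2 - d * (norm y)\<^sup>2 + e * (norm (x - y))\<^sup>2"
proof -
  define \<beta> where "\<beta> = e - d"
  define \<kappa> where "\<kappa> = 1/2 - e"
  have "\<beta> > 0" using assms by (simp add: \<beta>_def)
  then have "0 \<le> (1/\<beta>) * ((\<beta> *\<^sub>R y + \<kappa> *\<^sub>R x) \<bullet> (\<beta> *\<^sub>R y + \<kappa> *\<^sub>R x))" by simp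
  also have "\<dots> = \<beta> * (y \<bullet> y) + 2 * \<kappa> * (x \<bullet> y) + \<kappa>\<^sup>2 / \<beta> * (x \<bullet> x)"
    using \<open>\<beta> > 0\<close> by (simp add: inner_add_left inner_add_right inner_commute field_simps power2_eq_square)
  also have "\<dots> = (- c * (norm x)\<^sup>2 - d * (norm y)\<^sup>2 + e * (norm (x - y))\<^sup>2) - (- (x \<bullet> y))"
    unfolding c \<beta>_def \<kappa>_def power2_norm_eq_inner
    by (simp add: inner_diff_left inner_diff_right inner_commute field_simps power2_eq_square)
  finally show ?thesis by simp
qed

lemma power2_norm_sum_le:
  fixes u :: "'i \<Rightarrow> 'a::real_normed_vector"
  shows "(norm (\<Sum>i\<in>I. u i))\<^sup>2 \<le> real (card I) * (\<Sum>i\<in>I. (norm (u i))\<^sup>2)"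
proof (cases "finite I")
  case True
  have "(norm (\<Sum>i\<in>I. u i))\<^sup>2 \<le> (\<Sum>i\<in>I. 1 * norm (u i))\<^sup>2"
    by (simp add: norm_sum power_mono)
  also have "\<dots> \<le> (\<Sum>i\<in>I. 1\<^sup>2) * (\<Sum>i\<in>I. (norm (u i))\<^sup>2)"
    by (rule Cauchy_Schwarz_ineq_sum)
  finally show ?thesis by simp
qed simp

lemma power2_norm_add_le:
  fixes p q :: "'a::real_inner"
  shows "(norm (p + q))\<^sup>2 \<le> 2 * (norm p)\<^sup>2 + 2 * (norm q)\<^sup>2"
proof -
  have "0 \<le> (norm (p - q))\<^sup>2" by simp
  then show ?thesis unfolding power2_norm_eq_inner
    by (simp add: inner_add_left inner_add_right inner_diff_left inner_diff_right inner_commute)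
qed

section \<open>Stochastic gradients\<close>

locale stochastic_gradient =
  fixes gf :: "'a::euclidean_space \<Rightarrow> 'a" and G :: "'a \<Rightarrow> 'b \<Rightarrow> 'a" and D :: "'b measure"
    and \<sigma> :: real
  assumes prob_space_D: "prob_space D"
    and G_measurable: "(\<lambda>(x, \<xi>). G x \<xi>) \<in> borel_measurable (borel \<Otimes>\<^sub>M D)"
    and unbiased: "\<And>x. integrable D (G x) \<and> (\<integral>\<xi>. G x \<xi> \<partial>D) = gf x"
    and variance: "\<And>x. integrable D (\<lambda>\<xi>. (norm (G x \<xi> - gf x))\<^sup>2)
                        \<and> (\<integral>\<xi>. (norm (G x \<xi> - gf x))\<^sup>2 \<partial>D) \<le> \<sigma>\<^sup>2"
begin

sublocale D: prob_space D by (rule prob_space_D)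

lemma integral_power2_norm_add_noise:
  "integrable D (\<lambda>\<xi>. (norm (v + (G z \<xi> - gf z)))\<^sup>2)"
  "(\<integral>\<xi>. (norm (v + (G z \<xi> - gf z)))\<^sup>2 \<partial>D) = (norm v)\<^sup>2 + (\<integral>\<xi>. (norm (G z \<xi> - gf z))\<^sup>2 \<partial>D)"
proof -
  let ?N = "\<lambda>\<xi>. G z \<xi> - gf z"
  have expand: "(norm (v + ?N \<xi>))\<^sup>2 = (norm v)\<^sup>2 + 2 * (v \<bullet> ?N \<xi>) + (norm (?N \<xi>))\<^sup>2" for \<xi>
    unfolding power2_norm_eq_inner by (simp add: inner_add_left inner_add_right inner_commute)
  have int_N: "integrable D ?N" using unbiased[of z] by auto
  have mean_N: "(\<integral>\<xi>. ?N \<xi> \<partial>D) = 0" using unbiased[of z] by (simp add: D.prob_space)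
  have int_inner: "integrable D (\<lambda>\<xi>. v \<bullet> ?N \<xi>)" using int_N by (rule integrable_inner_right)
  have int_sq: "integrable D (\<lambda>\<xi>. (norm (?N \<xi>))\<^sup>2)" using variance[of z] by blast
  show "integrable D (\<lambda>\<xi>. (norm (v + ?N \<xi>))\<^sup>2)"
    unfolding expand using int_inner int_sq by simp
  show "(\<integral>\<xi>. (norm (v + ?N \<xi>))\<^sup>2 \<partial>D) = (norm v)\<^sup>2 + (\<integral>\<xi>. (norm (?N \<xi>))\<^sup>2 \<partial>D)"
    unfolding expand using int_N int_inner int_sq mean_N
    by (simp add: Bochner_Integration.integral_add D.prob_space)
qed

lemma nn_integral_noise_eq:
  "(\<integral>\<^sup>+\<xi>. ennreal ((norm (G z \<xi> - gf z))\<^sup>2) \<partial>D) = ennreal (\<integral>\<xi>. (norm (G z \<xi> - gf z))\<^sup>2 \<partial>D)"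
  using variance[of z] by (intro nn_integral_eq_integral) auto

lemma nn_integral_noise_le: "(\<integral>\<^sup>+\<xi>. ennreal ((norm (G z \<xi> - gf z))\<^sup>2) \<partial>D) \<le> ennreal (\<sigma>\<^sup>2)"
  unfolding nn_integral_noise_eq using variance[of z] by (simp add: ennreal_leI)

lemma nn_integral_power2_norm_add_noise:
  "(\<integral>\<^sup>+\<xi>. ennreal ((norm (v + (G z \<xi> - gf z)))\<^sup>2) \<partial>D)
     = ennreal ((norm v)\<^sup>2) + (\<integral>\<^sup>+\<xi>. ennreal ((norm (G z \<xi> - gf z))\<^sup>2) \<partial>D)"
  using integral_power2_norm_add_noise[of v z]
  by (simp add: nn_integral_eq_integral nn_integral_noise_eq ennreal_plus integral_nonneg_AE)

end

locale smooth_stochastic_gradient =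
  stochastic_gradient gf G D \<sigma> for gf :: "'a::euclidean_space \<Rightarrow> 'a" and G D \<sigma> +
  fixes f :: "'a \<Rightarrow> real" and L fstar :: real
  assumes has_gradient: "\<And>x. (f has_derivative (\<lambda>h. gf x \<bullet> h)) (at x)"
    and gradient_lipschitz: "\<And>x y. norm (gf x - gf y) \<le> L * norm (x - y)"
    and lower_bound: "\<And>x. fstar \<le> f x"
begin

lemma L_nonneg: "0 \<le> L"
  by (rule lipschitz_constant_nonneg[OF gradient_lipschitz])

lemma f_borel[measurable]: "f \<in> borel_measurable borel"
  using has_gradient has_derivative_continuous
  by (intro borel_measurable_continuous_onI continuous_at_imp_continuous_on) blast

lemma G_borel[measurable]: "G z \<in> borel_measurable D"
  using measurable_Pair2[OF G_measurable, of z] by simp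

lemma expected_smooth_descent:
  assumes "0 \<le> \<gamma>"
  shows "integrable D (\<lambda>\<xi>. f (x - \<gamma> *\<^sub>R G z \<xi>))"
    and "(\<integral>\<xi>. f (x - \<gamma> *\<^sub>R G z \<xi>) \<partial>D)
           \<le> f x - \<gamma> * (gf x \<bullet> gf z) + L * \<gamma>\<^sup>2 / 2 * ((norm (gf z))\<^sup>2 + \<sigma>\<^sup>2)"
proof -
  let ?N = "\<lambda>\<xi>. G z \<xi> - gf z"
  define h where "h \<xi> = f x - \<gamma> * (gf x \<bullet> G z \<xi>) + L * \<gamma>\<^sup>2 / 2 * (norm (gf z + ?N \<xi>))\<^sup>2" for \<xi>
  have f_le_h: "f (x - \<gamma> *\<^sub>R G z \<xi>) \<le> h \<xi>" for \<xi>
    using smooth_descent[OF has_gradient gradient_lipschitz, of "x - \<gamma> *\<^sub>R G z \<xi>" x] assms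
    by (simp add: h_def power_mult_distrib)
  have int_inner: "integrable D (\<lambda>\<xi>. gf x \<bullet> G z \<xi>)"
    using unbiased[of z] by (intro integrable_inner_right) auto
  note sq = integral_power2_norm_add_noise[of "gf z" z]
  have int_h: "integrable D h" unfolding h_def using int_inner sq(1) by simp
  have "integrable D (\<lambda>\<xi>. f (x - \<gamma> *\<^sub>R G z \<xi>) - fstar)"
  proof (rule Bochner_Integration.integrable_bound)
    show "integrable D (\<lambda>\<xi>. h \<xi> - fstar)" using int_h by simp
    have "norm (f (x - \<gamma> *\<^sub>R G z \<xi>) - fstar) \<le> norm (h \<xi> - fstar)" for \<xi>
      using f_le_h[of \<xi>] lower_bound[of "x - \<gamma> *\<^sub>R G z \<xi>"] by simp
    then show "AE \<xi> in D. norm (f (x - \<gamma> *\<^sub>R G z \<xi>) - fstar) \<le> norm (h \<xi> - fstar)" by simp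
  qed measurable
  from Bochner_Integration.integrable_add[OF this D.integrable_const[of fstar]]
  have "integrable D (\<lambda>\<xi>. (f (x - \<gamma> *\<^sub>R G z \<xi>) - fstar) + fstar)" .
  then show int_f: "integrable D (\<lambda>\<xi>. f (x - \<gamma> *\<^sub>R G z \<xi>))" by simp
  have "(\<integral>\<xi>. f (x - \<gamma> *\<^sub>R G z \<xi>) \<partial>D) \<le> (\<integral>\<xi>. h \<xi> \<partial>D)"
    using int_f int_h f_le_h by (intro integral_mono) auto
  also have "\<dots> = f x - \<gamma> * (gf x \<bullet> gf z) + L * \<gamma>\<^sup>2 / 2 * ((norm (gf z))\<^sup>2 + (\<integral>\<xi>. (norm (?N \<xi>))\<^sup>2 \<partial>D))"
    unfolding h_def sq(2)[symmetric] using int_inner sq(1) unbiased[of z]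
    by (simp add: Bochner_Integration.integral_add Bochner_Integration.integral_diff D.prob_space)
  also have "\<dots> \<le> f x - \<gamma> * (gf x \<bullet> gf z) + L * \<gamma>\<^sup>2 / 2 * ((norm (gf z))\<^sup>2 + \<sigma>\<^sup>2)"
    using variance[of z] L_nonneg by (intro add_left_mono mult_left_mono) auto
  finally show "(\<integral>\<xi>. f (x - \<gamma> *\<^sub>R G z \<xi>) \<partial>D) \<le> \<dots>" .
qed

lemma nn_integral_step_descent:
  assumes "0 \<le> \<gamma>" "0 \<le> c" "0 \<le> d" "d < e" "c = e - (e - 1/2)\<^sup>2 / (e - d)"
  shows "(\<integral>\<^sup>+\<xi>. ennreal (f (x - \<gamma> *\<^sub>R G z \<xi>) - fstar) \<partial>D)
           + ennreal (\<gamma> * c) * ennreal ((norm (gf x))\<^sup>2) + ennreal (\<gamma> * d) * ennreal ((norm (gf z))\<^sup>2)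
         \<le> ennreal (f x - fstar) + ennreal (\<gamma> * e) * ennreal ((norm (gf x - gf z))\<^sup>2)
           + ennreal (L * \<gamma>\<^sup>2 / 2) * ennreal ((norm (gf z))\<^sup>2) + ennreal (L * \<gamma>\<^sup>2 / 2 * \<sigma>\<^sup>2)"
proof -
  let ?Ef = "\<integral>\<xi>. f (x - \<gamma> *\<^sub>R G z \<xi>) \<partial>D"
  note descent = expected_smooth_descent[OF assms(1), of x z]
  have "- (gf x \<bullet> gf z) \<le> - c * (norm (gf x))\<^sup>2 - d * (norm (gf z))\<^sup>2 + e * (norm (gf x - gf z))\<^sup>2"
    using assms(4,5) by (rule neg_inner_le_norms)
  from mult_left_mono[OF this assms(1)] descent(2)
  have "(?Ef - fstar) + \<gamma> * c * (norm (gf x))\<^sup>2 + \<gamma> * d * (norm (gf z))\<^sup>2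
      \<le> (f x - fstar) + \<gamma> * e * (norm (gf x - gf z))\<^sup>2 + L * \<gamma>\<^sup>2 / 2 * (norm (gf z))\<^sup>2 + L * \<gamma>\<^sup>2 / 2 * \<sigma>\<^sup>2"
    by (simp add: algebra_simps)
  moreover have "0 \<le> ?Ef - fstar"
    using lower_bound descent(1) by (simp add: D.integral_ge_const)
  moreover have "(\<integral>\<^sup>+\<xi>. ennreal (f (x - \<gamma> *\<^sub>R G z \<xi>) - fstar) \<partial>D) = ennreal (?Ef - fstar)"
    using descent(1) lower_bound D.prob_space
    by (subst nn_integral_eq_integral) (auto simp: Bochner_Integration.integral_diff)
  ultimately show ?thesis
    using assms lower_bound[of x] L_nonneg
    by (simp add: ennreal_plus[symmetric] ennreal_mult[symmetric] ennreal_leI del: ennreal_plus)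
qed

end

section \<open>Delayed stochastic gradient descent\<close>

lemma nn_integral_PiM_fun_upd:
  fixes D :: "'b measure"
  assumes "prob_space D" and h: "h \<in> borel_measurable (PiM UNIV (\<lambda>_::nat. D))"
  shows "(\<integral>\<^sup>+\<omega>. h \<omega> \<partial>PiM UNIV (\<lambda>_. D))
           = (\<integral>\<^sup>+\<omega>. (\<integral>\<^sup>+\<xi>. h (fun_upd \<omega> m \<xi>) \<partial>D) \<partial>PiM UNIV (\<lambda>_. D))"
proof -
  let ?P = "PiM UNIV (\<lambda>_::nat. D)"
  interpret D: prob_space D by fact
  interpret Pi: prob_space ?P by (rule prob_space_PiM) (simp add: assms(1))
  interpret pair_prob_space D ?P by unfold_locales
  have "(\<lambda>p. (snd p)(m := fst p)) \<in> measurable (D \<Otimes>\<^sub>M ?P) ?P"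
    by (rule measurable_fun_upd[of UNIV UNIV m]) auto
  then have upd: "(\<lambda>(\<xi>, \<omega>). fun_upd \<omega> m \<xi>) \<in> measurable (D \<Otimes>\<^sub>M ?P) ?P"
    by (simp add: case_prod_beta')
  have "(\<integral>\<^sup>+\<omega>. h \<omega> \<partial>?P) = (\<integral>\<^sup>+\<omega>. h \<omega> \<partial>distr (D \<Otimes>\<^sub>M ?P) ?P (\<lambda>(\<xi>, \<omega>). fun_upd \<omega> m \<xi>))"
    using distr_pair_PiM_eq_PiM[of UNIV "\<lambda>_. D" m] assms(1) by simp
  also have "\<dots> = (\<integral>\<^sup>+p. h ((\<lambda>(\<xi>, \<omega>). fun_upd \<omega> m \<xi>) p) \<partial>(D \<Otimes>\<^sub>M ?P))"
    using h upd by (intro nn_integral_distr) auto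
  also have "\<dots> = (\<integral>\<^sup>+\<omega>. (\<integral>\<^sup>+\<xi>. h (fun_upd \<omega> m \<xi>) \<partial>D) \<partial>?P)"
    using nn_integral_snd[OF measurable_comp[OF upd h, unfolded comp_def]] by simp
  finally show ?thesis .
qed

lemma borel_measurable_nn_integral_fun_upd:
  fixes D :: "'b measure"
  assumes "prob_space D" and h: "h \<in> borel_measurable (PiM UNIV (\<lambda>_::nat. D))"
  shows "(\<lambda>\<omega>. \<integral>\<^sup>+\<xi>. h (fun_upd \<omega> m \<xi>) \<partial>D) \<in> borel_measurable (PiM UNIV (\<lambda>_::nat. D))"
proof -
  interpret D: prob_space D by fact
  have "(\<lambda>p. (fst p)(m := snd p)) \<in> measurable (PiM UNIV (\<lambda>_. D) \<Otimes>\<^sub>M D) (PiM UNIV (\<lambda>_. D))"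
    by (rule measurable_fun_upd[of UNIV UNIV m]) auto
  from D.borel_measurable_nn_integral_fst[OF measurable_comp[OF this h, unfolded comp_def]]
  show ?thesis by simp
qed

lemma nn_integral_le_lin_comb:
  assumes "\<And>\<omega>. u \<omega> \<le> \<alpha> * v \<omega> + \<beta> * w \<omega>" and "0 \<le> \<alpha>" "0 \<le> \<beta>"
    and "\<And>\<omega>. 0 \<le> v \<omega>" "\<And>\<omega>. 0 \<le> w \<omega>"
    and [measurable]: "v \<in> borel_measurable M" "w \<in> borel_measurable M"
  shows "(\<integral>\<^sup>+\<omega>. ennreal (u \<omega>) \<partial>M)
           \<le> ennreal \<alpha> * (\<integral>\<^sup>+\<omega>. ennreal (v \<omega>) \<partial>M) + ennreal \<beta> * (\<integral>\<^sup>+\<omega>. ennreal (w \<omega>) \<partial>M)"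
proof -
  have "(\<integral>\<^sup>+\<omega>. ennreal (u \<omega>) \<partial>M) \<le> (\<integral>\<^sup>+\<omega>. ennreal \<alpha> * ennreal (v \<omega>) + ennreal \<beta> * ennreal (w \<omega>) \<partial>M)"
    using assms(1-5)
    by (intro nn_integral_mono) (simp add: ennreal_mult[symmetric] ennreal_plus[symmetric] ennreal_leI del: ennreal_plus)
  also have "\<dots> = ennreal \<alpha> * (\<integral>\<^sup>+\<omega>. ennreal (v \<omega>) \<partial>M) + ennreal \<beta> * (\<integral>\<^sup>+\<omega>. ennreal (w \<omega>) \<partial>M)"
    by (simp add: nn_integral_add nn_integral_cmult)
  finally show ?thesis .
qed

lemma sum_delay_windows_le:
  fixes \<mu> :: "nat \<Rightarrow> real" and a b :: "nat \<Rightarrow> nat"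
  assumes \<mu>: "\<And>i. 0 \<le> \<mu> i" and b: "\<And>k. b k \<le> k" and R: "\<And>k. k - a k \<le> R"
  shows "(\<Sum>k<K. \<Sum>i\<in>{a k..<b k}. \<mu> i) \<le> real R * (\<Sum>i<K. \<mu> i)"
proof -
  let ?W = "\<lambda>i. {..<K} \<inter> {k. a k \<le> i \<and> i < b k}"
  have "(\<Sum>k<K. \<Sum>i\<in>{a k..<b k}. \<mu> i) = (\<Sum>k<K. \<Sum>i<K. if a k \<le> i \<and> i < b k then \<mu> i else 0)"
  proof (rule sum.cong[OF refl])
    fix k assume "k \<in> {..<K}"
    then have "{a k..<b k} = {..<K} \<inter> {i. a k \<le> i \<and> i < b k}" using b[of k] by auto
    then show "(\<Sum>i\<in>{a k..<b k}. \<mu> i) = (\<Sum>i<K. if a k \<le> i \<and> i < b k then \<mu> i else 0)"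
      by (simp add: sum.inter_restrict)
  qed
  also have "\<dots> = (\<Sum>i<K. real (card (?W i)) * \<mu> i)"
    by (subst sum.swap) (simp add: sum.If_cases)
  also have "\<dots> \<le> (\<Sum>i<K. real R * \<mu> i)"
  proof (intro sum_mono mult_right_mono)
    fix i
    have "?W i \<subseteq> {Suc i..i + R}"
    proof
      fix k assume "k \<in> ?W i"
      then show "k \<in> {Suc i..i + R}" using b[of k] R[of k] by auto
    qed
    then show "real (card (?W i)) \<le> real R"
      using card_mono[of "{Suc i..i + R}" "?W i"] by simp
  qed (rule \<mu>)
  finally show ?thesis by (simp add: sum_distrib_left)
qed

text \<open>The coefficient \<open>c = e - (e - 1/2)\<^sup>2 / (e - d)\<close> of \<open>neg_inner_le_norms\<close> for
  \<open>e = 1 / (2 * u)\<close> and \<open>d = 3 * u / 8\<close>.\<close>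

definition descent_coeff :: "real \<Rightarrow> real" where
  "descent_coeff u = (8 - 7 * u) / (2 * (4 - 3 * u\<^sup>2))"

lemma descent_coeff_eq:
  fixes u :: real
  assumes "0 < u" "u \<le> 1"
  shows "descent_coeff u = 1/(2*u) - (1/(2*u) - 1/2)\<^sup>2 / (1/(2*u) - 3*u/8)"
    and "3*u/8 < 1/(2*u)"
proof -
  have "u\<^sup>2 \<le> 1" using assms by (simp add: power_le_one)
  then have q: "0 < 4 - 3*u\<^sup>2" by linarith
  have "1/(2*u) - 3*u/8 = (4 - 3*u\<^sup>2) / (8*u)" and "(1/(2*u) - 1/2)\<^sup>2 = (1 - u)\<^sup>2 / (4*u\<^sup>2)"
    using assms by (simp_all add: field_simps power2_eq_square)
  then show "descent_coeff u = 1/(2*u) - (1/(2*u) - 1/2)\<^sup>2 / (1/(2*u) - 3*u/8)"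
    unfolding descent_coeff_def using assms q by (simp add: field_simps power2_eq_square)
  show "3*u/8 < 1/(2*u)" using assms q by (simp add: field_simps power2_eq_square)
qed

lemma descent_coeff_ge:
  fixes u :: real
  assumes "0 < u" "u \<le> 1"
  shows "1/8 \<le> descent_coeff u"
proof -
  have "u\<^sup>2 \<le> 1" using assms by (simp add: power_le_one)
  then have "0 < 4 - 3*u\<^sup>2" by linarith
  moreover have "2 * (4 - 3*u\<^sup>2) \<le> 8 * (8 - 7*u)"
    using assms by (simp add: algebra_simps) (use zero_le_power2[of u] in linarith)
  ultimately show ?thesis unfolding descent_coeff_def by (simp add: field_simps)
qed

text \<open>Step \<open>k\<close> draws the fresh sample \<open>\<omega> (idx k)\<close> and evaluates the stochastic gradient at the
  stale model \<open>X (a k)\<close>, advanced by the steps \<open>X k - X (b k)\<close> the same worker has already made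
  on it.\<close>

locale delayed_sgd = smooth_stochastic_gradient gf G D \<sigma> f L fstar
  for gf :: "'a::euclidean_space \<Rightarrow> 'a" and G D \<sigma> f L fstar +
  fixes \<gamma> :: real and a b idx :: "nat \<Rightarrow> nat" and R :: nat
    and X :: "nat \<Rightarrow> (nat \<Rightarrow> 'b) \<Rightarrow> 'a" and w0 :: 'a
  assumes stepsize_nonneg: "0 \<le> \<gamma>"
    and delay_order: "\<And>k. a k \<le> b k" "\<And>k. b k \<le> k"
    and delay_bound: "\<And>k. k - a k \<le> R"
    and inj_idx: "inj idx"
    and X_0: "\<And>\<omega>. X 0 \<omega> = w0"
    and X_Suc: "\<And>k \<omega>. X (Suc k) \<omega> = X k \<omega> - \<gamma> *\<^sub>R G (X k \<omega> - X (b k) \<omega> + X (a k) \<omega>) (\<omega> (idx k))"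
begin

abbreviation "P \<equiv> PiM UNIV (\<lambda>_::nat. D)"

sublocale P: prob_space P by (rule prob_space_PiM) (simp add: D.prob_space_axioms)

definition "eval_pt k \<omega> = X k \<omega> - X (b k) \<omega> + X (a k) \<omega>"
definition "stoch_grad k \<omega> = G (eval_pt k \<omega>) (\<omega> (idx k))"
definition "noise k \<omega> = stoch_grad k \<omega> - gf (eval_pt k \<omega>)"

lemma X_Suc_stoch_grad: "X (Suc k) \<omega> = X k \<omega> - \<gamma> *\<^sub>R stoch_grad k \<omega>"
  unfolding stoch_grad_def eval_pt_def by (rule X_Suc)

lemma X_telescope: "i \<le> j \<Longrightarrow> X j \<omega> = X i \<omega> - \<gamma> *\<^sub>R (\<Sum>l\<in>{i..<j}. stoch_grad l \<omega>)"
  by (induction j rule: dec_induct) (simp_all add: X_Suc_stoch_grad scaleR_add_right)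

lemma X_minus_eval_pt: "X k \<omega> - eval_pt k \<omega> = - \<gamma> *\<^sub>R (\<Sum>i\<in>{a k..<b k}. stoch_grad i \<omega>)"
  unfolding eval_pt_def using X_telescope[OF delay_order(1), of k \<omega>] by simp

lemma gf_borel[measurable]: "gf \<in> borel_measurable borel"
proof (rule borel_measurable_continuous_onI)
  have "L-lipschitz_on UNIV gf"
    unfolding lipschitz_on_def using gradient_lipschitz L_nonneg by (simp add: dist_norm)
  then show "continuous_on UNIV gf" by (rule lipschitz_on_continuous_on)
qed

lemma G_sample_borel:
  assumes "Y \<in> borel_measurable P"
  shows "(\<lambda>\<omega>. G (Y \<omega>) (\<omega> m)) \<in> borel_measurable P"
proof -
  have "(\<lambda>\<omega>. (Y \<omega>, \<omega> m)) \<in> measurable P (borel \<Otimes>\<^sub>M D)"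
    using assms by (intro measurable_Pair measurable_component_singleton) auto
  from measurable_comp[OF this G_measurable] show ?thesis by (simp add: comp_def)
qed

lemma X_borel[measurable]: "X k \<in> borel_measurable P"
proof (induction k rule: less_induct)
  case (less k)
  show ?case
  proof (cases k)
    case (Suc j)
    have "j < k" "b j < k" "a j < k" using Suc delay_order[of j] by auto
    then have "(\<lambda>\<omega>. X j \<omega> - X (b j) \<omega> + X (a j) \<omega>) \<in> borel_measurable P"
      using less by (intro borel_measurable_add borel_measurable_diff) auto
    from G_sample_borel[OF this] \<open>j < k\<close> less show ?thesis
      unfolding Suc X_Suc by (intro borel_measurable_diff borel_measurable_scaleR) auto
  qed (simp add: X_0)
qed

lemma eval_pt_borel[measurable]: "eval_pt k \<in> borel_measurable P"
  unfolding eval_pt_def by measurable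

lemma stoch_grad_borel[measurable]: "stoch_grad k \<in> borel_measurable P"
  unfolding stoch_grad_def by (rule G_sample_borel) simp

lemma noise_borel[measurable]: "noise k \<in> borel_measurable P"
  unfolding noise_def by measurable

lemma X_fun_upd: "(\<And>j. j < k \<Longrightarrow> idx j \<noteq> m) \<Longrightarrow> X k (fun_upd \<omega> m \<xi>) = X k \<omega>"
proof (induction k rule: less_induct)
  case (less k)
  have IH: "X i (fun_upd \<omega> m \<xi>) = X i \<omega>" if "i < k" for i
    by (rule less.IH[OF that]) (use less.prems that less_trans in blast)
  show ?case
  proof (cases k)
    case (Suc j)
    have "j < k" "b j < k" "a j < k" using Suc delay_order[of j] by auto
    then have "X j (fun_upd \<omega> m \<xi>) = X j \<omega>" "X (b j) (fun_upd \<omega> m \<xi>) = X (b j) \<omega>"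
      "X (a j) (fun_upd \<omega> m \<xi>) = X (a j) \<omega>" using IH by blast+
    moreover have "fun_upd \<omega> m \<xi> (idx j) = \<omega> (idx j)" using less.prems Suc by simp
    ultimately show ?thesis unfolding Suc X_Suc by (simp only:)
  qed (simp add: X_0)
qed

lemma X_fun_upd_idx: "i \<le> k \<Longrightarrow> X i (fun_upd \<omega> (idx k) \<xi>) = X i \<omega>"
  by (rule X_fun_upd) (use inj_idx in \<open>auto simp: inj_eq\<close>)

lemma eval_pt_fun_upd_idx: "i \<le> k \<Longrightarrow> eval_pt i (fun_upd \<omega> (idx k) \<xi>) = eval_pt i \<omega>"
  unfolding eval_pt_def using delay_order[of i] by (simp add: X_fun_upd_idx)

lemma noise_fun_upd_idx: "i < k \<Longrightarrow> noise i (fun_upd \<omega> (idx k) \<xi>) = noise i \<omega>"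
  using inj_idx by (simp add: noise_def stoch_grad_def eval_pt_fun_upd_idx inj_eq)

lemma nn_integral_resample:
  assumes "h \<in> borel_measurable P" and "\<And>\<omega> \<xi>. h (fun_upd \<omega> m \<xi>) = H \<omega> \<xi>"
  shows "(\<integral>\<^sup>+\<omega>. h \<omega> \<partial>P) = (\<integral>\<^sup>+\<omega>. (\<integral>\<^sup>+\<xi>. H \<omega> \<xi> \<partial>D) \<partial>P)"
    and "(\<lambda>\<omega>. \<integral>\<^sup>+\<xi>. H \<omega> \<xi> \<partial>D) \<in> borel_measurable P"
  using nn_integral_PiM_fun_upd[OF prob_space_D assms(1), of m]
    borel_measurable_nn_integral_fun_upd[OF prob_space_D assms(1), of m]
  by (simp_all add: assms(2))

definition "E_subopt k = (\<integral>\<^sup>+\<omega>. ennreal (f (X k \<omega>) - fstar) \<partial>P)"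
definition "E_grad_sq k = (\<integral>\<^sup>+\<omega>. ennreal ((norm (gf (X k \<omega>)))\<^sup>2) \<partial>P)"
definition "E_eval_grad_sq k = (\<integral>\<^sup>+\<omega>. ennreal ((norm (gf (eval_pt k \<omega>)))\<^sup>2) \<partial>P)"
definition "E_grad_gap_sq k = (\<integral>\<^sup>+\<omega>. ennreal ((norm (gf (X k \<omega>) - gf (eval_pt k \<omega>)))\<^sup>2) \<partial>P)"
definition "E_noise_sq k = (\<integral>\<^sup>+\<omega>. ennreal ((norm (noise k \<omega>))\<^sup>2) \<partial>P)"
definition "E_noise_sum_sq i j = (\<integral>\<^sup>+\<omega>. ennreal ((norm (\<Sum>l\<in>{i..<j}. noise l \<omega>))\<^sup>2) \<partial>P)"

lemma noise_fun_upd_self: "noise k (fun_upd \<omega> (idx k) \<xi>) = G (eval_pt k \<omega>) \<xi> - gf (eval_pt k \<omega>)"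
  by (simp add: noise_def stoch_grad_def eval_pt_fun_upd_idx)

lemma E_noise_sq_resample:
  "E_noise_sq k = (\<integral>\<^sup>+\<omega>. (\<integral>\<^sup>+\<xi>. ennreal ((norm (G (eval_pt k \<omega>) \<xi> - gf (eval_pt k \<omega>)))\<^sup>2) \<partial>D) \<partial>P)"
  "(\<lambda>\<omega>. \<integral>\<^sup>+\<xi>. ennreal ((norm (G (eval_pt k \<omega>) \<xi> - gf (eval_pt k \<omega>)))\<^sup>2) \<partial>D) \<in> borel_measurable P"
proof -
  have "(\<lambda>\<omega>. ennreal ((norm (noise k \<omega>))\<^sup>2)) \<in> borel_measurable P" by measurable
  from nn_integral_resample[OF this, of "idx k"]
  show "E_noise_sq k = (\<integral>\<^sup>+\<omega>. (\<integral>\<^sup>+\<xi>. ennreal ((norm (G (eval_pt k \<omega>) \<xi> - gf (eval_pt k \<omega>)))\<^sup>2) \<partial>D) \<partial>P)"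
    and "(\<lambda>\<omega>. \<integral>\<^sup>+\<xi>. ennreal ((norm (G (eval_pt k \<omega>) \<xi> - gf (eval_pt k \<omega>)))\<^sup>2) \<partial>D) \<in> borel_measurable P"
    unfolding E_noise_sq_def noise_fun_upd_self by simp_all
qed

lemma E_noise_sq_le: "E_noise_sq k \<le> ennreal (\<sigma>\<^sup>2)"
proof -
  have "E_noise_sq k \<le> (\<integral>\<^sup>+\<omega>. ennreal (\<sigma>\<^sup>2) \<partial>P)"
    unfolding E_noise_sq_resample(1) by (intro nn_integral_mono nn_integral_noise_le)
  then show ?thesis by (simp add: P.emeasure_space_1)
qed

text \<open>The noise terms are orthogonal: resampling the sample of step \<open>j\<close> leaves the earlier
  ones unchanged, while the noise of step \<open>j\<close> has conditional mean zero.\<close>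

lemma E_noise_sum_sq_Suc:
  assumes "i \<le> j"
  shows "E_noise_sum_sq i (Suc j) = E_noise_sum_sq i j + E_noise_sq j"
proof -
  let ?S = "\<lambda>\<omega>. \<Sum>l\<in>{i..<j}. noise l \<omega>"
  have S_upd: "?S (fun_upd \<omega> (idx j) \<xi>) = ?S \<omega>" for \<omega> \<xi>
    using noise_fun_upd_idx by (intro sum.cong) auto
  have "E_noise_sum_sq i (Suc j) = (\<integral>\<^sup>+\<omega>. ennreal ((norm (?S \<omega> + noise j \<omega>))\<^sup>2) \<partial>P)"
    unfolding E_noise_sum_sq_def using assms by (simp add: sum.atLeastLessThan_Suc)
  also have "\<dots> = (\<integral>\<^sup>+\<omega>. (\<integral>\<^sup>+\<xi>. ennreal ((norm (?S \<omega> + (G (eval_pt j \<omega>) \<xi> - gf (eval_pt j \<omega>))))\<^sup>2) \<partial>D) \<partial>P)"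
    by (rule nn_integral_resample[where m = "idx j"]) (simp_all add: S_upd noise_fun_upd_self)
  also have "\<dots> = (\<integral>\<^sup>+\<omega>. ennreal ((norm (?S \<omega>))\<^sup>2)
                    + (\<integral>\<^sup>+\<xi>. ennreal ((norm (G (eval_pt j \<omega>) \<xi> - gf (eval_pt j \<omega>)))\<^sup>2) \<partial>D) \<partial>P)"
    by (intro nn_integral_cong nn_integral_power2_norm_add_noise)
  also have "\<dots> = E_noise_sum_sq i j + E_noise_sq j"
    unfolding E_noise_sum_sq_def E_noise_sq_resample(1) using E_noise_sq_resample(2)
    by (intro nn_integral_add) auto
  finally show ?thesis .
qed

lemma E_noise_sum_sq_le: "i \<le> j \<Longrightarrow> E_noise_sum_sq i j \<le> ennreal (real (j - i) * \<sigma>\<^sup>2)"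
proof (induction j rule: dec_induct)
  case (step j)
  have "E_noise_sum_sq i (Suc j) \<le> ennreal (real (j - i) * \<sigma>\<^sup>2) + ennreal (\<sigma>\<^sup>2)"
    unfolding E_noise_sum_sq_Suc[OF step(1)] using step(3) E_noise_sq_le by (rule add_mono)
  also have "\<dots> = ennreal (real (j - i) * \<sigma>\<^sup>2 + \<sigma>\<^sup>2)" by (simp add: ennreal_plus)
  also have "real (j - i) * \<sigma>\<^sup>2 + \<sigma>\<^sup>2 = real (Suc j - i) * \<sigma>\<^sup>2"
    using step(1) by (simp add: Suc_diff_le algebra_simps)
  finally show ?case .
qed (simp add: E_noise_sum_sq_def)

lemma norm_grad_gap_sq_le:
  fixes k :: nat
  defines "I \<equiv> {a k..<b k}"
  shows "(norm (gf (X k \<omega>) - gf (eval_pt k \<omega>)))\<^sup>2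
           \<le> 2 * L\<^sup>2 * \<gamma>\<^sup>2 * R * (\<Sum>i\<in>I. (norm (gf (eval_pt i \<omega>)))\<^sup>2)
             + 2 * L\<^sup>2 * \<gamma>\<^sup>2 * (norm (\<Sum>i\<in>I. noise i \<omega>))\<^sup>2"
proof -
  have card_I: "real (card I) \<le> real R" using delay_bound[of k] delay_order(2)[of k] by (simp add: I_def)
  have "(norm (gf (X k \<omega>) - gf (eval_pt k \<omega>)))\<^sup>2 \<le> (L * norm (X k \<omega> - eval_pt k \<omega>))\<^sup>2"
    using gradient_lipschitz by (simp add: power_mono)
  also have "\<dots> = L\<^sup>2 * \<gamma>\<^sup>2 * (norm ((\<Sum>i\<in>I. gf (eval_pt i \<omega>)) + (\<Sum>i\<in>I. noise i \<omega>)))\<^sup>2"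
    unfolding X_minus_eval_pt I_def noise_def using stepsize_nonneg
    by (simp add: power_mult_distrib sum.distrib[symmetric])
  also have "\<dots> \<le> L\<^sup>2 * \<gamma>\<^sup>2 * (2 * (norm (\<Sum>i\<in>I. gf (eval_pt i \<omega>)))\<^sup>2 + 2 * (norm (\<Sum>i\<in>I. noise i \<omega>))\<^sup>2)"
    by (intro mult_left_mono power2_norm_add_le) auto
  also have "\<dots> \<le> L\<^sup>2 * \<gamma>\<^sup>2 * (2 * (real (card I) * (\<Sum>i\<in>I. (norm (gf (eval_pt i \<omega>)))\<^sup>2))
                                 + 2 * (norm (\<Sum>i\<in>I. noise i \<omega>))\<^sup>2)"
    by (intro mult_left_mono add_right_mono power2_norm_sum_le) auto
  also have "\<dots> \<le> L\<^sup>2 * \<gamma>\<^sup>2 * (2 * (real R * (\<Sum>i\<in>I. (norm (gf (eval_pt i \<omega>)))\<^sup>2))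
                                 + 2 * (norm (\<Sum>i\<in>I. noise i \<omega>))\<^sup>2)"
    using card_I by (intro mult_left_mono add_right_mono mult_right_mono sum_nonneg) auto
  finally show ?thesis by (simp add: algebra_simps)
qed

lemma E_grad_gap_sq_le:
  "E_grad_gap_sq k \<le> ennreal (2 * L\<^sup>2 * \<gamma>\<^sup>2 * R) * (\<Sum>i\<in>{a k..<b k}. E_eval_grad_sq i)
                      + ennreal (2 * L\<^sup>2 * \<gamma>\<^sup>2 * R * \<sigma>\<^sup>2)"
proof -
  let ?I = "{a k..<b k}"
  have "E_grad_gap_sq k \<le> ennreal (2 * L\<^sup>2 * \<gamma>\<^sup>2 * R)
          * (\<integral>\<^sup>+\<omega>. ennreal (\<Sum>i\<in>?I. (norm (gf (eval_pt i \<omega>)))\<^sup>2) \<partial>P)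
        + ennreal (2 * L\<^sup>2 * \<gamma>\<^sup>2) * E_noise_sum_sq (a k) (b k)"
    unfolding E_grad_gap_sq_def E_noise_sum_sq_def
    by (rule nn_integral_le_lin_comb[OF norm_grad_gap_sq_le]) (auto intro: sum_nonneg)
  also have "(\<integral>\<^sup>+\<omega>. ennreal (\<Sum>i\<in>?I. (norm (gf (eval_pt i \<omega>)))\<^sup>2) \<partial>P) = (\<Sum>i\<in>?I. E_eval_grad_sq i)"
  proof -
    have "(\<integral>\<^sup>+\<omega>. ennreal (\<Sum>i\<in>?I. (norm (gf (eval_pt i \<omega>)))\<^sup>2) \<partial>P)
        = (\<integral>\<^sup>+\<omega>. (\<Sum>i\<in>?I. ennreal ((norm (gf (eval_pt i \<omega>)))\<^sup>2)) \<partial>P)"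
      by (simp add: sum_ennreal)
    also have "\<dots> = (\<Sum>i\<in>?I. E_eval_grad_sq i)"
      unfolding E_eval_grad_sq_def by (rule nn_integral_sum) measurable
    finally show ?thesis .
  qed
  also have "ennreal (2 * L\<^sup>2 * \<gamma>\<^sup>2) * E_noise_sum_sq (a k) (b k)
      \<le> ennreal (2 * L\<^sup>2 * \<gamma>\<^sup>2) * ennreal (real R * \<sigma>\<^sup>2)"
  proof (rule mult_left_mono)
    have "real (b k - a k) * \<sigma>\<^sup>2 \<le> real R * \<sigma>\<^sup>2"
      using delay_bound[of k] delay_order(2)[of k] by (intro mult_right_mono) auto
    then show "E_noise_sum_sq (a k) (b k) \<le> ennreal (real R * \<sigma>\<^sup>2)"
      using E_noise_sum_sq_le[OF delay_order(1)[of k]] ennreal_leI order_trans by blast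
  qed simp
  also have "ennreal (2 * L\<^sup>2 * \<gamma>\<^sup>2) * ennreal (real R * \<sigma>\<^sup>2) = ennreal (2 * L\<^sup>2 * \<gamma>\<^sup>2 * R * \<sigma>\<^sup>2)"
    by (subst ennreal_mult[symmetric]) (auto simp: mult.assoc)
  finally show ?thesis by (simp add: add_left_mono)
qed

lemma E_grad_sq_le: "E_grad_sq k \<le> ennreal (2 * L) * E_subopt k"
proof -
  have "E_grad_sq k \<le> ennreal (2 * L) * E_subopt k + ennreal 0 * (\<integral>\<^sup>+\<omega>. ennreal 0 \<partial>P)"
    unfolding E_grad_sq_def E_subopt_def
    by (intro nn_integral_le_lin_comb)
      (auto simp: norm_grad_sq_le[OF has_gradient gradient_lipschitz lower_bound L_nonneg]
        lower_bound L_nonneg)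
  then show ?thesis by simp
qed

lemma E_eval_grad_sq_le: "E_eval_grad_sq k \<le> 2 * E_grad_sq k + 2 * E_grad_gap_sq k"
proof -
  have "(norm (gf (eval_pt k \<omega>)))\<^sup>2
      \<le> 2 * (norm (gf (X k \<omega>)))\<^sup>2 + 2 * (norm (gf (X k \<omega>) - gf (eval_pt k \<omega>)))\<^sup>2" for \<omega>
    using power2_norm_add_le[of "gf (X k \<omega>)" "gf (eval_pt k \<omega>) - gf (X k \<omega>)"]
    by (simp add: norm_minus_commute)
  then have "E_eval_grad_sq k \<le> ennreal 2 * E_grad_sq k + ennreal 2 * E_grad_gap_sq k"
    unfolding E_eval_grad_sq_def E_grad_sq_def E_grad_gap_sq_def by (rule nn_integral_le_lin_comb) auto
  then show ?thesis by simp
qed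

lemma E_subopt_Suc_le:
  assumes "0 \<le> c" "0 \<le> d" "d < e" "c = e - (e - 1/2)\<^sup>2 / (e - d)"
  shows "E_subopt (Suc k) + ennreal (\<gamma> * c) * E_grad_sq k + ennreal (\<gamma> * d) * E_eval_grad_sq k
     \<le> E_subopt k + ennreal (\<gamma> * e) * E_grad_gap_sq k + ennreal (L * \<gamma>\<^sup>2 / 2) * E_eval_grad_sq k
       + ennreal (L * \<gamma>\<^sup>2 / 2 * \<sigma>\<^sup>2)"
proof -
  let ?A = "\<lambda>\<omega>. \<integral>\<^sup>+\<xi>. ennreal (f (X k \<omega> - \<gamma> *\<^sub>R G (eval_pt k \<omega>) \<xi>) - fstar) \<partial>D"
  have upd: "ennreal (f (X (Suc k) (fun_upd \<omega> (idx k) \<xi>)) - fstar)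
      = ennreal (f (X k \<omega> - \<gamma> *\<^sub>R G (eval_pt k \<omega>) \<xi>) - fstar)" for \<omega> \<xi>
    by (simp add: X_Suc_stoch_grad X_fun_upd_idx stoch_grad_def eval_pt_fun_upd_idx)
  have "(\<lambda>\<omega>. ennreal (f (X (Suc k) \<omega>) - fstar)) \<in> borel_measurable P" by measurable
  note resample = nn_integral_resample[OF this upd]
  have "E_subopt (Suc k) + ennreal (\<gamma> * c) * E_grad_sq k + ennreal (\<gamma> * d) * E_eval_grad_sq k
      = (\<integral>\<^sup>+\<omega>. ?A \<omega> + ennreal (\<gamma> * c) * ennreal ((norm (gf (X k \<omega>)))\<^sup>2)
                 + ennreal (\<gamma> * d) * ennreal ((norm (gf (eval_pt k \<omega>)))\<^sup>2) \<partial>P)"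
    unfolding E_subopt_def E_grad_sq_def E_eval_grad_sq_def resample(1)
    using resample(2) by (simp add: nn_integral_add nn_integral_cmult)
  also have "\<dots> \<le> (\<integral>\<^sup>+\<omega>. ennreal (f (X k \<omega>) - fstar)
        + ennreal (\<gamma> * e) * ennreal ((norm (gf (X k \<omega>) - gf (eval_pt k \<omega>)))\<^sup>2)
        + ennreal (L * \<gamma>\<^sup>2 / 2) * ennreal ((norm (gf (eval_pt k \<omega>)))\<^sup>2) + ennreal (L * \<gamma>\<^sup>2 / 2 * \<sigma>\<^sup>2) \<partial>P)"
    using stepsize_nonneg assms by (intro nn_integral_mono nn_integral_step_descent)
  also have "\<dots> = E_subopt k + ennreal (\<gamma> * e) * E_grad_gap_sq k
      + ennreal (L * \<gamma>\<^sup>2 / 2) * E_eval_grad_sq k + ennreal (L * \<gamma>\<^sup>2 / 2 * \<sigma>\<^sup>2)"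
    unfolding E_subopt_def E_grad_gap_sq_def E_eval_grad_sq_def
    by (simp add: nn_integral_add nn_integral_cmult P.emeasure_space_1)
  finally show ?thesis .
qed

lemma E_finite_step:
  assumes "E_subopt k < \<top>" and "\<And>i. i < k \<Longrightarrow> E_eval_grad_sq i < \<top>"
  shows "E_grad_sq k < \<top>" "E_grad_gap_sq k < \<top>" "E_eval_grad_sq k < \<top>"
proof -
  show grad: "E_grad_sq k < \<top>"
    using le_less_trans[OF E_grad_sq_le] assms(1) by (simp add: ennreal_mult_less_top)
  have "(\<Sum>i\<in>{a k..<b k}. E_eval_grad_sq i) < \<top>"
    using assms(2) delay_order(2)[of k] by (simp add: less_top)
  then show gap: "E_grad_gap_sq k < \<top>"
    using le_less_trans[OF E_grad_gap_sq_le] by (simp add: ennreal_mult_less_top)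
  show "E_eval_grad_sq k < \<top>"
    using le_less_trans[OF E_eval_grad_sq_le] grad gap by (simp add: ennreal_mult_less_top)
qed

lemma E_finite_upto: "E_subopt k < \<top> \<and> (\<forall>i<k. E_eval_grad_sq i < \<top>)"
proof (induction k)
  case 0
  then show ?case by (simp add: E_subopt_def X_0 P.emeasure_space_1)
next
  case (Suc k)
  then have subopt: "E_subopt k < \<top>" and "\<And>i. i < k \<Longrightarrow> E_eval_grad_sq i < \<top>" by auto
  note fin = E_finite_step[OF this]
  have "E_subopt (Suc k) \<le> E_subopt (Suc k) + ennreal (\<gamma> * (1/2)) * E_grad_sq k + ennreal (\<gamma> * 0) * E_eval_grad_sq k"
    by simp
  also have "\<dots> \<le> E_subopt k + ennreal (\<gamma> * (1/2)) * E_grad_gap_sq k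
      + ennreal (L * \<gamma>\<^sup>2 / 2) * E_eval_grad_sq k + ennreal (L * \<gamma>\<^sup>2 / 2 * \<sigma>\<^sup>2)"
    by (rule E_subopt_Suc_le) (auto simp: power2_eq_square)
  also have "\<dots> < \<top>" using subopt fin by (simp add: ennreal_mult_less_top)
  finally show ?case using Suc fin less_Suc_eq by auto
qed

lemma E_finite: "E_subopt k < \<top>" "E_grad_sq k < \<top>" "E_eval_grad_sq k < \<top>" "E_grad_gap_sq k < \<top>"
  using E_finite_upto[of k] E_finite_step[of k] by auto

text \<open>The expectations \<open>E_\<dots>\<close> are nonnegative integrals; once they are known to be finite,
  the descent inequalities are summed and telescoped for their real values.\<close>

definition "subopt k = enn2real (E_subopt k)"
definition "grad_sq k = enn2real (E_grad_sq k)"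
definition "eval_grad_sq k = enn2real (E_eval_grad_sq k)"
definition "grad_gap_sq k = enn2real (E_grad_gap_sq k)"

lemma E_eq_ennreal:
  "E_subopt k = ennreal (subopt k)" "E_grad_sq k = ennreal (grad_sq k)"
  "E_eval_grad_sq k = ennreal (eval_grad_sq k)" "E_grad_gap_sq k = ennreal (grad_gap_sq k)"
  unfolding subopt_def grad_sq_def eval_grad_sq_def grad_gap_sq_def
  using E_finite by (auto simp: ennreal_enn2real less_top)

lemma expectations_nonneg:
  "0 \<le> subopt k" "0 \<le> grad_sq k" "0 \<le> eval_grad_sq k" "0 \<le> grad_gap_sq k"
  unfolding subopt_def grad_sq_def eval_grad_sq_def grad_gap_sq_def by simp_all

lemma subopt_Suc_le:
  assumes "0 \<le> c" "0 \<le> d" "d < e" "c = e - (e - 1/2)\<^sup>2 / (e - d)"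
  shows "subopt (Suc k) + \<gamma> * c * grad_sq k + \<gamma> * d * eval_grad_sq k
     \<le> subopt k + \<gamma> * e * grad_gap_sq k + L * \<gamma>\<^sup>2 / 2 * eval_grad_sq k + L * \<gamma>\<^sup>2 / 2 * \<sigma>\<^sup>2"
proof -
  note nonneg = expectations_nonneg[of k] expectations_nonneg[of "Suc k"] stepsize_nonneg L_nonneg
  have "0 \<le> e" using assms by simp
  with E_subopt_Suc_le[OF assms, of k] nonneg assms show ?thesis
    unfolding E_eq_ennreal
    by (simp add: ennreal_mult[symmetric] ennreal_plus[symmetric] del: ennreal_plus)
qed

lemma grad_gap_sq_le:
  "grad_gap_sq k \<le> 2 * L\<^sup>2 * \<gamma>\<^sup>2 * R * (\<Sum>i\<in>{a k..<b k}. eval_grad_sq i) + 2 * L\<^sup>2 * \<gamma>\<^sup>2 * R * \<sigma>\<^sup>2"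
proof -
  have "(\<Sum>i\<in>{a k..<b k}. E_eval_grad_sq i) = ennreal (\<Sum>i\<in>{a k..<b k}. eval_grad_sq i)"
    unfolding E_eq_ennreal using expectations_nonneg by simp
  with E_grad_gap_sq_le[of k] expectations_nonneg show ?thesis
    unfolding E_eq_ennreal
    by (simp add: ennreal_mult[symmetric] ennreal_plus[symmetric] sum_nonneg del: ennreal_plus)
qed

lemma weighted_sum_grad_sq_le:
  assumes "0 \<le> c" "0 \<le> d" "d < e" "c = e - (e - 1/2)\<^sup>2 / (e - d)"
    and d: "2 * e * \<gamma>\<^sup>2 * L\<^sup>2 * (real R)\<^sup>2 + \<gamma> * L / 2 \<le> d"
  shows "\<gamma> * c * (\<Sum>k<K. grad_sq k)
           \<le> subopt 0 + real K * (2 * e * \<gamma>^3 * L\<^sup>2 * R * \<sigma>\<^sup>2 + L * \<gamma>\<^sup>2 * \<sigma>\<^sup>2 / 2)"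
proof -
  define N where "N = (\<Sum>k<K. grad_sq k)"
  define M where "M = (\<Sum>k<K. eval_grad_sq k)"
  define Gap where "Gap = (\<Sum>k<K. grad_gap_sq k)"
  have "0 \<le> e" "0 \<le> M" using assms expectations_nonneg by (auto simp: M_def sum_nonneg)
  have "(\<Sum>k<K. subopt (Suc k) + \<gamma> * c * grad_sq k + \<gamma> * d * eval_grad_sq k)
      \<le> (\<Sum>k<K. subopt k + \<gamma> * e * grad_gap_sq k + L * \<gamma>\<^sup>2 / 2 * eval_grad_sq k + L * \<gamma>\<^sup>2 / 2 * \<sigma>\<^sup>2)"
    by (intro sum_mono subopt_Suc_le assms(1-4))
  moreover have "(\<Sum>k<K. subopt (Suc k)) - (\<Sum>k<K. subopt k) = subopt K - subopt 0"
    by (simp add: sum_lessThan_telescope sum_subtractf[symmetric])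
  ultimately have descent: "subopt K + \<gamma> * c * N + \<gamma> * d * M
      \<le> subopt 0 + \<gamma> * e * Gap + L * \<gamma>\<^sup>2 / 2 * M + real K * (L * \<gamma>\<^sup>2 / 2 * \<sigma>\<^sup>2)"
    by (simp add: N_def M_def Gap_def sum.distrib sum_distrib_left)
  have "Gap \<le> (\<Sum>k<K. 2 * L\<^sup>2 * \<gamma>\<^sup>2 * R * (\<Sum>i\<in>{a k..<b k}. eval_grad_sq i) + 2 * L\<^sup>2 * \<gamma>\<^sup>2 * R * \<sigma>\<^sup>2)"
    unfolding Gap_def by (intro sum_mono grad_gap_sq_le)
  also have "\<dots> \<le> 2 * L\<^sup>2 * \<gamma>\<^sup>2 * R * (R * M) + real K * (2 * L\<^sup>2 * \<gamma>\<^sup>2 * R * \<sigma>\<^sup>2)"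
    unfolding sum.distrib sum_distrib_left[symmetric] M_def
    using sum_delay_windows_le[OF _ delay_order(2) delay_bound, of eval_grad_sq K] expectations_nonneg
    by (intro add_mono mult_left_mono) auto
  finally have "\<gamma> * e * Gap \<le> \<gamma> * M * (2 * e * \<gamma>\<^sup>2 * L\<^sup>2 * (real R)\<^sup>2)
      + real K * (2 * e * \<gamma>^3 * L\<^sup>2 * R * \<sigma>\<^sup>2)"
    using mult_left_mono[of _ _ "\<gamma> * e"] stepsize_nonneg \<open>0 \<le> e\<close>
    by (fastforce simp: algebra_simps power2_eq_square power3_eq_cube)
  moreover have "\<gamma> * M * (2 * e * \<gamma>\<^sup>2 * L\<^sup>2 * (real R)\<^sup>2 + \<gamma> * L / 2) \<le> \<gamma> * M * d"
    using d stepsize_nonneg \<open>0 \<le> M\<close> by (intro mult_left_mono) auto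
  ultimately show ?thesis
    using descent expectations_nonneg(1)[of K] unfolding N_def
    by (simp add: algebra_simps power2_eq_square)
qed

lemma sum_grad_sq_le:
  assumes "0 < u" "u \<le> 1" "2 * \<gamma> * L * R \<le> u" "4 * \<gamma> * L \<le> u"
  shows "\<gamma> * descent_coeff u * (\<Sum>k<K. grad_sq k) \<le> (f w0 - fstar) + real K * (L * \<gamma>\<^sup>2 * \<sigma>\<^sup>2)"
proof -
  define e where "e = 1 / (2 * u)"
  have \<rho>: "2 * e * (\<gamma> * L * R) \<le> 1/2" and "0 \<le> \<gamma> * L * R"
    using assms stepsize_nonneg L_nonneg by (simp_all add: e_def field_simps)
  have "2 * e * \<gamma>\<^sup>2 * L\<^sup>2 * (real R)\<^sup>2 = (2 * e * (\<gamma> * L * R)) * (\<gamma> * L * R)"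
    by (simp add: power2_eq_square)
  also have "\<dots> \<le> (1/2) * (u/2)"
    using \<rho> \<open>0 \<le> \<gamma> * L * R\<close> assms(3) by (intro mult_mono) auto
  finally have d: "2 * e * \<gamma>\<^sup>2 * L\<^sup>2 * (real R)\<^sup>2 + \<gamma> * L / 2 \<le> 3 * u / 8"
    using assms(4) by linarith
  have "2 * e * \<gamma>^3 * L\<^sup>2 * R * \<sigma>\<^sup>2 = (2 * e * (\<gamma> * L * R)) * (L * \<gamma>\<^sup>2 * \<sigma>\<^sup>2)"
    by (simp add: power2_eq_square power3_eq_cube)
  also have "\<dots> \<le> (1/2) * (L * \<gamma>\<^sup>2 * \<sigma>\<^sup>2)"
    using \<rho> L_nonneg by (intro mult_right_mono) auto
  finally have "real K * (2 * e * \<gamma>^3 * L\<^sup>2 * R * \<sigma>\<^sup>2 + L * \<gamma>\<^sup>2 * \<sigma>\<^sup>2 / 2) \<le> real K * (L * \<gamma>\<^sup>2 * \<sigma>\<^sup>2)"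
    by (intro mult_left_mono) auto
  moreover have "subopt 0 = f w0 - fstar"
    using E_eq_ennreal(1)[of 0] lower_bound[of w0] expectations_nonneg(1)[of 0]
    by (simp add: E_subopt_def X_0 P.emeasure_space_1)
  moreover have "\<gamma> * descent_coeff u * (\<Sum>k<K. grad_sq k)
      \<le> subopt 0 + real K * (2 * e * \<gamma>^3 * L\<^sup>2 * R * \<sigma>\<^sup>2 + L * \<gamma>\<^sup>2 * \<sigma>\<^sup>2 / 2)"
  proof (rule weighted_sum_grad_sq_le[OF _ _ _ _ d])
    show "0 \<le> descent_coeff u" using descent_coeff_ge[OF assms(1,2)] by simp
    show "3 * u / 8 < e" "descent_coeff u = e - (e - 1/2)\<^sup>2 / (e - 3 * u / 8)"
      using descent_coeff_eq[OF assms(1,2)] by (simp_all add: e_def)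
  qed (use assms(1) in simp)
  ultimately show ?thesis by linarith
qed

lemma average_E_grad_sq_le:
  assumes "0 < u" "u \<le> 1" "2 * \<gamma> * L * R \<le> u" "4 * \<gamma> * L \<le> u" "0 < \<gamma>"
    and "(f w0 - fstar) + real K * (L * \<gamma>\<^sup>2 * \<sigma>\<^sup>2) \<le> \<gamma> * descent_coeff u * (real K * \<epsilon>)"
  shows "(\<Sum>k<K. \<integral>\<^sup>+\<omega>. ennreal ((norm (gf (X k \<omega>)))\<^sup>2) \<partial>P) / ennreal (real K) \<le> ennreal \<epsilon>"
proof (cases "K = 0")
  case False
  have pos: "0 < \<gamma> * descent_coeff u" using assms descent_coeff_ge[OF assms(1,2)] by simp
  have "\<gamma> * descent_coeff u * (\<Sum>k<K. grad_sq k) \<le> \<gamma> * descent_coeff u * (real K * \<epsilon>)"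
    using sum_grad_sq_le[OF assms(1-4), of K] assms(6) by (rule order_trans)
  then have sum_le: "(\<Sum>k<K. grad_sq k) \<le> real K * \<epsilon>" using pos by (rule mult_left_le_imp_le)
  have "(\<Sum>k<K. \<integral>\<^sup>+\<omega>. ennreal ((norm (gf (X k \<omega>)))\<^sup>2) \<partial>P) = ennreal (\<Sum>k<K. grad_sq k)"
    using expectations_nonneg by (simp add: E_grad_sq_def[symmetric] E_eq_ennreal(2))
  also have "\<dots> / ennreal (real K) = ennreal ((\<Sum>k<K. grad_sq k) / real K)"
    using False expectations_nonneg by (intro divide_ennreal sum_nonneg) auto
  also have "\<dots> \<le> ennreal \<epsilon>"
    using sum_le False by (intro ennreal_leI) (simp add: field_simps)
  finally show ?thesis .
qed simp

end

section \<open>The index structure of Cycle SGD\<close>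

lemma appending_chain:
  assumes "\<And>t. \<exists>ys. xs (Suc t) = xs t @ ys \<and> ys \<noteq> []"
  shows "t \<le> length (xs t)" and "t \<le> t' \<Longrightarrow> k < length (xs t) \<Longrightarrow> xs t' ! k = xs t ! k"
proof -
  show "t \<le> length (xs t)"
  proof (induction t)
    case (Suc t)
    from assms[of t] obtain ys where "xs (Suc t) = xs t @ ys" "ys \<noteq> []" by blast
    then show ?case using Suc by (cases ys) auto
  qed simp
  have "\<exists>ys. xs t' = xs t @ ys" if "t \<le> t'" for t t'
    using that
  proof (induction t' rule: dec_induct)
    case (step m)
    then show ?case using assms[of m] by force
  qed simp
  then show "xs t' ! k = xs t ! k" if "t \<le> t'" "k < length (xs t)"
    using that by (force simp: nth_append)
qed

lemma distinct_if_mset_add_eq: "mset xs + M = mset ys \<Longrightarrow> distinct ys \<Longrightarrow> distinct xs"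
proof -
  assume "mset xs + M = mset ys" "distinct ys"
  moreover obtain zs where "mset zs = M" using ex_mset by blast
  ultimately have "distinct (xs @ zs)" using mset_eq_imp_distinct_iff[of "xs @ zs" ys] by simp
  then show "distinct xs" by simp
qed

lemma num_groups_pos: "1 \<le> n \<Longrightarrow> 1 \<le> s \<Longrightarrow> 0 < num_groups n s"
  by (simp add: num_groups_def)

lemma num_groups_mult_bounds:
  assumes "1 \<le> s"
  shows "n \<le> num_groups n s * s" and "num_groups n s * s < n + s"
proof -
  have g: "real (num_groups n s) = real_of_int \<lceil>real n / real s\<rceil>"
    by (simp add: num_groups_def)
  have s: "0 < real s" using assms by simp
  have "real n = real n / real s * real s" using s by simp
  also have "\<dots> \<le> real (num_groups n s) * real s" unfolding g using s by (intro mult_right_mono) auto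
  finally show "n \<le> num_groups n s * s" by (simp flip: of_nat_mult)
  have "real (num_groups n s) * real s < (real n / real s + 1) * real s"
    unfolding g using s by (intro mult_strict_right_mono) linarith+
  also have "\<dots> = real n + real s" using s by (simp add: field_simps)
  finally show "num_groups n s * s < n + s" by (simp flip: of_nat_mult of_nat_add)
qed

lemma in_group_lt: "in_group n s t i \<Longrightarrow> i < n"
  by (simp add: in_group_def)

lemma in_group_first:
  assumes "1 \<le> n" "1 \<le> s"
  shows "in_group n s t ((t mod num_groups n s) * s)"
proof -
  let ?g = "num_groups n s"
  have "t mod ?g < ?g" using num_groups_pos[OF assms] by simp
  then have "Suc (t mod ?g) * s \<le> ?g * s" by (intro mult_le_mono1) simp
  then show ?thesis
    using num_groups_mult_bounds(2)[OF assms(2), of n] assms(2) by (simp add: in_group_def)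
qed

lemma served_groups_nonempty:
  assumes "1 \<le> n" "1 \<le> s"
  shows "filter (in_group n s t) [0..<n] \<noteq> []"
proof -
  have "(t mod num_groups n s) * s \<in> set (filter (in_group n s t) [0..<n])"
    using in_group_first[OF assms, of t] in_group_lt by auto
  then show ?thesis by (metis empty_iff list.set(1))
qed

lemma set_served_group: "set (filter (in_group n s t) [0..<n]) = {i. in_group n s t i}"
  using in_group_lt by auto

lemma length_served_group: "length (filter (in_group n s t) [0..<n]) = card {i. in_group n s t i}"
  unfolding set_served_group[symmetric] by (rule distinct_card[symmetric]) simp

lemma in_group_window:
  assumes "1 \<le> s" "i < n"
  shows "\<exists>\<tau>. t \<le> \<tau> \<and> \<tau> < t + num_groups n s \<and> in_group n s \<tau> i"
proof -
  let ?g = "num_groups n s" and ?r = "i div s"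
  have "i < ?g * s" using assms num_groups_mult_bounds(1)[OF assms(1), of n] by linarith
  then have r: "?r < ?g" using assms(1) by (simp add: div_less_iff_less_mult)
  have t: "t - t mod ?g = ?g * (t div ?g)" by (simp add: minus_mod_eq_mult_div)
  obtain \<tau> where "t \<le> \<tau>" "\<tau> < t + ?g" "\<tau> mod ?g = ?r"
  proof (cases "t mod ?g \<le> ?r")
    case True
    show ?thesis
      by (rule that[of "t - t mod ?g + ?r"]) (use True r t in \<open>auto simp: mod_less_eq_dividend\<close>)
  next
    case False
    have "t - t mod ?g + ?g + ?r = ?r + ?g * (t div ?g + 1)" using t by simp
    then have "(t - t mod ?g + ?g + ?r) mod ?g = ?r" using r by (simp only: mod_mult_self2) simp
    moreover have "t mod ?g < ?g" using r by simp
    ultimately show ?thesis using False by (intro that[of "t - t mod ?g + ?g + ?r"]) auto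
  qed
  then show ?thesis using assms(2) by (auto simp: in_group_def)
qed

definition served :: "nat \<Rightarrow> nat \<Rightarrow> nat \<Rightarrow> nat \<Rightarrow> nat set" where
  "served n s t l = {w. \<exists>\<tau>. t - l \<le> \<tau> \<and> \<tau> < t \<and> in_group n s \<tau> w}"

lemma served_subset: "served n s t l \<subseteq> {..<n}"
  unfolding served_def using in_group_lt by blast

lemma finite_served: "finite (served n s t l)"
  using finite_subset[OF served_subset] by simp

lemma served_Suc: "served n s (Suc t) (Suc l) = served n s t l \<union> {w. in_group n s t w}"
  unfolding served_def by (auto simp: less_Suc_eq intro: exI[of _ t])

lemma served_disjoint:
  assumes "l < num_groups n s"
  shows "served n s t l \<inter> {w. in_group n s t w} = {}"
proof -
  have False if "t - l \<le> \<tau>" "\<tau> < t" "\<tau> mod num_groups n s = t mod num_groups n s" for \<tau>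
  proof -
    have "num_groups n s dvd t - \<tau>" using that mod_eq_dvd_iff_nat[of \<tau> t "num_groups n s"] by simp
    moreover have "0 < t - \<tau>" "t - \<tau> < num_groups n s" using that assms by auto
    ultimately show False using nat_dvd_not_less by blast
  qed
  moreover have "\<tau> mod num_groups n s = t mod num_groups n s"
    if "in_group n s \<tau> w" "in_group n s t w" for \<tau> w
    using that by (simp add: in_group_def)
  ultimately show ?thesis by (auto simp: served_def)
qed

lemma card_served_group_le:
  assumes "l < num_groups n s"
  shows "card (served n s t l) + card {w. in_group n s t w} \<le> n"
proof -
  have "{w. in_group n s t w} \<subseteq> {..<n}" by (auto dest: in_group_lt)
  then have "card (served n s t l \<union> {w. in_group n s t w}) \<le> card {..<n}"
    using served_subset by (intro card_mono) auto
  moreover have "finite {w. in_group n s t w}" using finite_subset[OF \<open>_ \<subseteq> {..<n}\<close>] by simp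
  ultimately show ?thesis
    using served_disjoint[OF assms] finite_served by (simp add: card_Un_disjoint)
qed

fun tag_batch :: "nat \<Rightarrow> (nat \<Rightarrow> nat \<times> nat list) \<Rightarrow> nat list \<Rightarrow> (nat \<times> nat \<times> nat) list" where
  "tag_batch p W [] = []"
| "tag_batch p W (i # ws) =
     map (\<lambda>m. (fst (W i), p, m)) (snd (W i)) @ tag_batch (p + length (snd (W i))) W ws"

lemma length_tag_batch: "length (tag_batch p W ws) = (\<Sum>i\<leftarrow>ws. length (snd (W i)))"
  by (induction ws arbitrary: p) auto

lemma sample_indices_tag_batch: "map (snd \<circ> snd) (tag_batch p W ws) = concat (map (snd \<circ> W) ws)"
  by (induction ws arbitrary: p) (auto simp: comp_def)

lemma nth_tag_batch:
  assumes "\<And>i. i \<in> set ws \<Longrightarrow> length (h i) = length (snd (W i))"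
    and "q < length (concat (map h ws))"
  obtains ws\<^sub>1 i ws\<^sub>2 j where "ws = ws\<^sub>1 @ i # ws\<^sub>2" "j < length (h i)"
    "q = length (concat (map h ws\<^sub>1)) + j"
    "tag_batch p W ws ! q = (fst (W i), p + length (concat (map h ws\<^sub>1)), snd (W i) ! j)"
proof -
  have "\<exists>ws\<^sub>1 i ws\<^sub>2 j. ws = ws\<^sub>1 @ i # ws\<^sub>2 \<and> j < length (h i) \<and> q = length (concat (map h ws\<^sub>1)) + j
    \<and> tag_batch p W ws ! q = (fst (W i), p + length (concat (map h ws\<^sub>1)), snd (W i) ! j)"
    using assms
  proof (induction ws arbitrary: p q)
    case (Cons i ws)
    have len: "length (h i) = length (snd (W i))" using Cons.prems(1) by simp
    show ?case
    proof (cases "q < length (h i)")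
      case True
      then show ?thesis using len by (intro exI[of _ "[]"] exI[of _ i] exI[of _ ws] exI[of _ q]) (auto simp: nth_append)
    next
      case False
      then have "q - length (h i) < length (concat (map h ws))" using Cons.prems(2) by simp
      then have "\<exists>ws\<^sub>1 i' ws\<^sub>2 j. ws = ws\<^sub>1 @ i' # ws\<^sub>2 \<and> j < length (h i')
          \<and> q - length (h i) = length (concat (map h ws\<^sub>1)) + j
          \<and> tag_batch (p + length (snd (W i))) W ws ! (q - length (h i))
             = (fst (W i'), p + length (snd (W i)) + length (concat (map h ws\<^sub>1)), snd (W i') ! j)"
        using Cons.prems(1) by (intro Cons.IH) auto
      then obtain ws\<^sub>1 i' ws\<^sub>2 j where "ws = ws\<^sub>1 @ i' # ws\<^sub>2" "j < length (h i')"
        "q - length (h i) = length (concat (map h ws\<^sub>1)) + j"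
        "tag_batch (p + length (snd (W i))) W ws ! (q - length (h i))
           = (fst (W i'), p + length (snd (W i)) + length (concat (map h ws\<^sub>1)), snd (W i') ! j)"
        by blast
      moreover have "tag_batch p W (i # ws) ! q = tag_batch (p + length (snd (W i))) W ws ! (q - length (h i))"
        using False len by (simp add: nth_append)
      ultimately show ?thesis
        using False len by (intro exI[of _ "i # ws\<^sub>1"] exI[of _ i'] exI[of _ ws\<^sub>2] exI[of _ j]) simp
    qed
  qed simp
  then show ?thesis using that by blast
qed

text \<open>The index bookkeeping of \<^const>\<open>cyc_state\<close>, which does not depend on the samples: worker
  \<open>i\<close> carries the main-branch position of its last reset and the sample indices of its pending
  gradients; each applied gradient carries the position of its worker's last reset, the position
  where its worker's batch starts on the main branch, and its sample index.\<close>

fun cyc_tags :: "nat \<Rightarrow> nat \<Rightarrow> nat \<Rightarrow> (nat \<Rightarrow> nat \<times> nat list) \<times> (nat \<times> nat \<times> nat) list" where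
  "cyc_tags n s 0 = ((\<lambda>i. (0, [])), [])"
| "cyc_tags n s (Suc t) =
     (let (W, A) = cyc_tags n s t;
          W1 = (\<lambda>i. (fst (W i), snd (W i) @ [t * n + i]));
          sent = tag_batch (length A) W1 (filter (in_group n s t) [0..<n])
      in ((\<lambda>i. if in_group n s t i then (length A + length sent, []) else W1 i), A @ sent))"

lemma cyc_tags_Suc:
  assumes "cyc_tags n s t = (W, A)"
  shows "cyc_tags n s (Suc t) =
    (let W1 = (\<lambda>i. (fst (W i), snd (W i) @ [t * n + i]));
         sent = tag_batch (length A) W1 (filter (in_group n s t) [0..<n])
     in ((\<lambda>i. if in_group n s t i then (length A + length sent, []) else W1 i), A @ sent))"
  using assms by (simp add: Let_def)

declare cyc_tags.simps(2)[simp del]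

text \<open>For worker \<open>i\<close> with tags \<open>w\<close>, \<open>length (snd w)\<close> is the number of rounds since its last reset;
  the gradients applied since then were sent by the workers served in these rounds, each
  sending at most \<open>num_groups n s\<close> of them.\<close>

definition worker_tags_ok :: "nat \<Rightarrow> nat \<Rightarrow> nat \<Rightarrow> nat \<Rightarrow> nat \<Rightarrow> nat \<times> nat list \<Rightarrow> bool" where
  "worker_tags_ok n s t p i w \<longleftrightarrow>
     fst w \<le> p \<and> length (snd w) \<le> t \<and> length (snd w) < num_groups n s
     \<and> (\<forall>\<tau>. t - length (snd w) \<le> \<tau> \<and> \<tau> < t \<longrightarrow> \<not> in_group n s \<tau> i)
     \<and> p - fst w \<le> num_groups n s * card (served n s t (length (snd w)))"

definition worker_tags_inv :: "nat \<Rightarrow> nat \<Rightarrow> nat \<Rightarrow> (nat \<Rightarrow> nat \<times> nat list) \<Rightarrow> nat \<Rightarrow> bool" where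
  "worker_tags_inv n s t W p \<longleftrightarrow> (\<forall>i<n. worker_tags_ok n s t p i (W i))"

definition applied_tags_inv :: "nat \<Rightarrow> nat \<Rightarrow> (nat \<times> nat \<times> nat) list \<Rightarrow> bool" where
  "applied_tags_inv n s A \<longleftrightarrow> (\<forall>k<length A.
     fst (A ! k) \<le> fst (snd (A ! k)) \<and> fst (snd (A ! k)) \<le> k \<and> k - fst (A ! k) < num_groups n s * n)"

definition sample_tags_inv :: "nat \<Rightarrow> nat \<Rightarrow> (nat \<Rightarrow> nat \<times> nat list) \<Rightarrow> (nat \<times> nat \<times> nat) list \<Rightarrow> bool" where
  "sample_tags_inv n t W A \<longleftrightarrow> mset (map (snd \<circ> snd) A) + (\<Sum>i<n. mset (snd (W i))) = mset [0..<t * n]"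

lemma pending_lengths_le:
  assumes "worker_tags_inv n s t W p" "set ws \<subseteq> {..<n}"
  shows "(\<Sum>i\<leftarrow>ws. Suc (length (snd (W i)))) \<le> num_groups n s * length ws"
  using assms(2)
proof (induction ws)
  case (Cons i ws)
  then have "Suc (length (snd (W i))) \<le> num_groups n s"
    using assms(1) unfolding worker_tags_inv_def worker_tags_ok_def by auto
  with Cons show ?case by simp
qed simp

lemma length_served_batch_le:
  assumes "worker_tags_inv n s t W p"
  shows "length (tag_batch q (\<lambda>i. (fst (W i), snd (W i) @ [t * n + i])) (filter (in_group n s t) [0..<n]))
           \<le> num_groups n s * card {w. in_group n s t w}"
  using pending_lengths_le[OF assms, of "filter (in_group n s t) [0..<n]"] in_group_lt
  by (auto simp: length_tag_batch length_served_group)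

lemma batch_tag_delay_bound:
  assumes inv: "worker_tags_inv n s t W p"
    and L: "filter (in_group n s t) [0..<n] = L\<^sub>1 @ i # L\<^sub>2" and j: "j \<le> length (snd (W i))"
  shows "fst (W i) \<le> p"
    and "p + (\<Sum>w\<leftarrow>L\<^sub>1. Suc (length (snd (W w)))) + j - fst (W i) < num_groups n s * n"
proof -
  let ?g = "num_groups n s" and ?l = "length (snd (W i))"
  have "\<forall>w\<in>set (filter (in_group n s t) [0..<n]). w < n" by simp
  then have "set L\<^sub>1 \<subseteq> {..<n}" "i < n" unfolding L by auto
  then have off: "(\<Sum>w\<leftarrow>L\<^sub>1. Suc (length (snd (W w)))) \<le> ?g * length L\<^sub>1"
    using pending_lengths_le[OF inv] by simp
  from \<open>i < n\<close> have "worker_tags_ok n s t p i (W i)" using inv by (simp add: worker_tags_inv_def)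
  then have reset: "fst (W i) \<le> p" and "?l < ?g" and count: "p - fst (W i) \<le> ?g * card (served n s t ?l)"
    unfolding worker_tags_ok_def by blast+
  then show "fst (W i) \<le> p" by blast
  have "length L\<^sub>1 + 1 \<le> card {w. in_group n s t w}"
    using L length_served_group[of n s t] by simp
  then have "card (served n s t ?l) + length L\<^sub>1 + 1 \<le> n"
    using card_served_group_le[OF \<open>?l < ?g\<close>, of t] by linarith
  then have "?g * (card (served n s t ?l) + length L\<^sub>1 + 1) \<le> ?g * n" by (rule mult_le_mono2)
  then have "?g * card (served n s t ?l) + ?g * length L\<^sub>1 + ?g \<le> ?g * n" by (simp add: add_mult_distrib2)
  then show "p + (\<Sum>w\<leftarrow>L\<^sub>1. Suc (length (snd (W w)))) + j - fst (W i) < ?g * n"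
    using reset count off j \<open>?l < ?g\<close> by linarith
qed

lemma worker_tags_inv_step:
  assumes "1 \<le> s" and inv: "worker_tags_inv n s t W (length A)"
  defines "W1 \<equiv> \<lambda>i. (fst (W i), snd (W i) @ [t * n + i])"
  defines "sent \<equiv> tag_batch (length A) W1 (filter (in_group n s t) [0..<n])"
  shows "worker_tags_inv n s (Suc t)
           (\<lambda>i. if in_group n s t i then (length A + length sent, []) else W1 i) (length (A @ sent))"
  unfolding worker_tags_inv_def
proof (intro allI impI)
  fix i assume "i < n"
  let ?g = "num_groups n s" and ?l = "length (snd (W i))" and ?group = "{w. in_group n s t w}"
  have reset: "fst (W i) \<le> length A" and "?l \<le> t" "?l < ?g"
    and window: "\<And>\<tau>. t - ?l \<le> \<tau> \<Longrightarrow> \<tau> < t \<Longrightarrow> \<not> in_group n s \<tau> i"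
    and count: "length A - fst (W i) \<le> ?g * card (served n s t ?l)"
    using inv \<open>i < n\<close> unfolding worker_tags_inv_def worker_tags_ok_def by blast+
  show "worker_tags_ok n s (Suc t) (length (A @ sent)) i
          (if in_group n s t i then (length A + length sent, []) else W1 i)"
  proof (cases "in_group n s t i")
    case True
    then show ?thesis using \<open>?l < ?g\<close> by (auto simp: worker_tags_ok_def)
  next
    case False
    have window': "\<not> in_group n s \<tau> i" if "t - ?l \<le> \<tau>" "\<tau> < Suc t" for \<tau>
      using window[OF that(1)] False that(2) less_Suc_eq by blast
    have "Suc ?l < ?g"
    proof (rule ccontr)
      assume "\<not> Suc ?l < ?g"
      obtain \<tau> where "t - ?l \<le> \<tau>" "\<tau> < t - ?l + ?g" "in_group n s \<tau> i"
        using in_group_window[OF assms(1) \<open>i < n\<close>] by blast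
      with window' \<open>\<not> Suc ?l < ?g\<close> \<open>?l \<le> t\<close> show False by fastforce
    qed
    have "length (A @ sent) - fst (W i) \<le> ?g * card (served n s t ?l) + ?g * card ?group"
      using count length_served_batch_le[OF inv, of "length A"] reset
      unfolding sent_def W1_def length_append by linarith
    also have "\<dots> = ?g * card (served n s (Suc t) (Suc ?l))"
      using served_disjoint[OF \<open>?l < ?g\<close>, of t] finite_served finite_subset[OF _ finite_lessThan[of n]]
      by (simp add: served_Suc card_Un_disjoint add_mult_distrib2 in_group_lt subset_eq)
    finally show ?thesis
      using False reset \<open>Suc ?l < ?g\<close> \<open>?l \<le> t\<close> window' by (simp add: worker_tags_ok_def W1_def)
  qed
qed

lemma applied_tags_inv_step:
  assumes workers: "worker_tags_inv n s t W (length A)" and applied: "applied_tags_inv n s A"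
  defines "W1 \<equiv> \<lambda>i. (fst (W i), snd (W i) @ [t * n + i])"
  defines "sent \<equiv> tag_batch (length A) W1 (filter (in_group n s t) [0..<n])"
  shows "applied_tags_inv n s (A @ sent)"
  unfolding applied_tags_inv_def
proof (intro allI impI)
  fix k assume k: "k < length (A @ sent)"
  let ?L = "filter (in_group n s t) [0..<n]"
  show "fst ((A @ sent) ! k) \<le> fst (snd ((A @ sent) ! k)) \<and> fst (snd ((A @ sent) ! k)) \<le> k
        \<and> k - fst ((A @ sent) ! k) < num_groups n s * n"
  proof (cases "k < length A")
    case True
    then show ?thesis using applied by (simp add: applied_tags_inv_def nth_append)
  next
    case False
    have q_lt: "k - length A < length (concat (map (\<lambda>i. snd (W1 i)) ?L))"
      using k False by (simp add: sent_def length_tag_batch length_concat comp_def)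
    obtain L\<^sub>1 i L\<^sub>2 j where L: "?L = L\<^sub>1 @ i # L\<^sub>2" and j: "j < length (snd (W1 i))"
      and q: "k - length A = length (concat (map (\<lambda>i. snd (W1 i)) L\<^sub>1)) + j"
      and tag: "sent ! (k - length A)
        = (fst (W1 i), length A + length (concat (map (\<lambda>i. snd (W1 i)) L\<^sub>1)), snd (W1 i) ! j)"
      unfolding sent_def
      by (rule nth_tag_batch[of ?L "\<lambda>i. snd (W1 i)" W1 "k - length A" "length A", OF _ q_lt]) auto
    have off: "length (concat (map (\<lambda>i. snd (W1 i)) L\<^sub>1)) = (\<Sum>w\<leftarrow>L\<^sub>1. Suc (length (snd (W w))))"
      by (simp add: W1_def length_concat comp_def)
    from j have "j \<le> length (snd (W i))" by (simp add: W1_def)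
    note bound = batch_tag_delay_bound[OF workers L this]
    have "k = length A + (\<Sum>w\<leftarrow>L\<^sub>1. Suc (length (snd (W w)))) + j" using False q off by simp
    moreover have "(A @ sent) ! k = (fst (W i), length A + (\<Sum>w\<leftarrow>L\<^sub>1. Suc (length (snd (W w)))), snd (W1 i) ! j)"
      using False tag off by (simp add: nth_append W1_def)
    ultimately show ?thesis using bound by simp
  qed
qed

lemma sum_add_mset_upt:
  "(\<Sum>i<m. add_mset (c + i) (M i)) = (\<Sum>i<m. M i) + mset [c..<c + m]"
  by (induction m) (simp_all add: add.assoc)

lemma sample_tags_inv_step:
  fixes s :: nat
  assumes "sample_tags_inv n t W A"
  defines "W1 \<equiv> \<lambda>i. (fst (W i), snd (W i) @ [t * n + i])"
  defines "sent \<equiv> tag_batch (length A) W1 (filter (in_group n s t) [0..<n])"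
  shows "sample_tags_inv n (Suc t)
           (\<lambda>i. if in_group n s t i then (length A + length sent, []) else W1 i) (A @ sent)"
proof -
  let ?f = "\<lambda>i. mset (snd (W1 i))"
  have sent: "mset (map (snd \<circ> snd) sent) = (\<Sum>i<n. if in_group n s t i then ?f i else {#})"
    unfolding sent_def sample_indices_tag_batch mset_concat
    by (simp add: sum_list_map_filter' interv_sum_list_conv_sum_set_nat lessThan_atLeast0 comp_def)
  have rest: "(\<Sum>i<n. mset (snd (if in_group n s t i then (length A + length sent, []) else W1 i)))
      = (\<Sum>i<n. if in_group n s t i then {#} else ?f i)"
    by (intro sum.cong) auto
  have "(\<Sum>i<n. if in_group n s t i then ?f i else {#}) + (\<Sum>i<n. if in_group n s t i then {#} else ?f i)
      = (\<Sum>i<n. add_mset (t * n + i) (mset (snd (W i))))"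
    unfolding sum.distrib[symmetric] by (intro sum.cong) (auto simp: W1_def)
  then have "mset (map (snd \<circ> snd) (A @ sent))
      + (\<Sum>i<n. mset (snd (if in_group n s t i then (length A + length sent, []) else W1 i)))
      = (mset (map (snd \<circ> snd) A) + (\<Sum>i<n. mset (snd (W i)))) + mset [t * n..<t * n + n]"
    by (simp only: map_append mset_append sent rest add.assoc sum_add_mset_upt)
  also have "\<dots> = mset [0..<Suc t * n]"
    using assms(1) upt_add_eq_append[of 0 "t * n" n]
    by (simp add: sample_tags_inv_def add.commute)
  finally show ?thesis unfolding sample_tags_inv_def .
qed

definition reset_pos :: "nat \<Rightarrow> nat \<Rightarrow> nat \<Rightarrow> nat" where
  "reset_pos n s k = fst (snd (cyc_tags n s (Suc k)) ! k)"

definition batch_pos :: "nat \<Rightarrow> nat \<Rightarrow> nat \<Rightarrow> nat" where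
  "batch_pos n s k = fst (snd (snd (cyc_tags n s (Suc k)) ! k))"

definition sample_index :: "nat \<Rightarrow> nat \<Rightarrow> nat \<Rightarrow> nat" where
  "sample_index n s k = snd (snd (snd (cyc_tags n s (Suc k)) ! k))"

context
  fixes n s :: nat
  assumes n: "1 \<le> n" and s: "1 \<le> s"
begin

lemma cyc_tags_inv:
  "worker_tags_inv n s t (fst (cyc_tags n s t)) (length (snd (cyc_tags n s t)))
   \<and> applied_tags_inv n s (snd (cyc_tags n s t))
   \<and> sample_tags_inv n t (fst (cyc_tags n s t)) (snd (cyc_tags n s t))"
proof (induction t)
  case 0
  show ?case using num_groups_pos[OF n s]
    by (simp add: worker_tags_inv_def worker_tags_ok_def applied_tags_inv_def sample_tags_inv_def)
next
  case (Suc t)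
  obtain W A where WA: "cyc_tags n s t = (W, A)" by (cases "cyc_tags n s t")
  show ?case
    using Suc worker_tags_inv_step[OF s] applied_tags_inv_step sample_tags_inv_step
    unfolding WA cyc_tags_Suc[OF WA] Let_def by simp
qed

lemma cyc_tags_Suc_append: "\<exists>ys. snd (cyc_tags n s (Suc t)) = snd (cyc_tags n s t) @ ys \<and> ys \<noteq> []"
proof -
  obtain W A where WA: "cyc_tags n s t = (W, A)" by (cases "cyc_tags n s t")
  obtain i L where "filter (in_group n s t) [0..<n] = i # L"
    using served_groups_nonempty[OF n s, of t] by (cases "filter (in_group n s t) [0..<n]") auto
  then show ?thesis unfolding cyc_tags_Suc[OF WA] Let_def WA by simp
qed

lemmas length_cyc_tags = appending_chain(1)[of "\<lambda>t. snd (cyc_tags n s t)", OF cyc_tags_Suc_append]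
lemmas nth_cyc_tags = appending_chain(2)[of "\<lambda>t. snd (cyc_tags n s t)", OF cyc_tags_Suc_append]

lemma nth_cyc_tags_eq:
  assumes "k < length (snd (cyc_tags n s t))"
  shows "snd (cyc_tags n s t) ! k = (reset_pos n s k, batch_pos n s k, sample_index n s k)"
proof -
  have "k < length (snd (cyc_tags n s (Suc k)))" using length_cyc_tags[of "Suc k"] by simp
  then have "snd (cyc_tags n s t) ! k = snd (cyc_tags n s (Suc k)) ! k"
    using assms nth_cyc_tags by (cases "t \<le> Suc k") auto
  then show ?thesis by (simp add: reset_pos_def batch_pos_def sample_index_def)
qed

lemma cyc_delays:
  "reset_pos n s k \<le> batch_pos n s k" "batch_pos n s k \<le> k" "k - reset_pos n s k < num_groups n s * n"
  using cyc_tags_inv[of "Suc k"] length_cyc_tags[of "Suc k"]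
  by (auto simp: applied_tags_inv_def reset_pos_def batch_pos_def)

lemma inj_sample_index: "inj (sample_index n s)"
proof (rule linorder_injI)
  fix j k :: nat assume "j < k"
  let ?A = "snd (cyc_tags n s (Suc k))"
  have "k < length ?A" using length_cyc_tags[of "Suc k"] by simp
  moreover have "mset (map (snd \<circ> snd) ?A) + (\<Sum>i<n. mset (snd (fst (cyc_tags n s (Suc k)) i)))
      = mset [0..<Suc k * n]"
    using cyc_tags_inv[of "Suc k"] unfolding sample_tags_inv_def by blast
  then have "distinct (map (snd \<circ> snd) ?A)" by (rule distinct_if_mset_add_eq) simp
  ultimately have "snd (snd (?A ! j)) \<noteq> snd (snd (?A ! k))"
    using \<open>j < k\<close> by (auto simp: distinct_conv_nth)
  then show "sample_index n s j \<noteq> sample_index n s k"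
    using nth_cyc_tags_eq[of j "Suc k"] nth_cyc_tags_eq[of k "Suc k"] \<open>j < k\<close> \<open>k < length ?A\<close> by simp
qed

end

section \<open>Cycle SGD as delayed SGD\<close>

lemma cyc_state_Suc:
  assumes "cyc_state \<gamma> G n s w0 \<omega> t = (Z, w, gs)"
  shows "cyc_state \<gamma> G n s w0 \<omega> (Suc t) =
    (let Z1 = (\<lambda>i. (fst (Z i) - \<gamma> *\<^sub>R G (fst (Z i)) (\<omega> (t * n + i)),
                   snd (Z i) @ [G (fst (Z i)) (\<omega> (t * n + i))]));
         sent = concat (map (\<lambda>i. snd (Z1 i)) (filter (in_group n s t) [0..<n]))
     in ((\<lambda>i. if in_group n s t i then (w - \<gamma> *\<^sub>R sum_list sent, []) else Z1 i),
         w - \<gamma> *\<^sub>R sum_list sent, gs @ sent))"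
  by (subst cyc_state.simps(2), unfold assms, simp only: prod.case Let_def,
      unfold case_prod_unfold, simp)

declare cyc_state.simps(2)[simp del]

context
  fixes \<gamma> :: real and G :: "'a::real_normed_vector \<Rightarrow> 'b \<Rightarrow> 'a" and n s :: nat and w0 :: 'a
    and \<omega> :: "nat \<Rightarrow> 'b"
  assumes n: "1 \<le> n" and s: "1 \<le> s"
begin

abbreviation (input) "applied_grads t \<equiv> snd (snd (cyc_state \<gamma> G n s w0 \<omega> t))"
abbreviation (input) "branch \<equiv> main_branch \<gamma> G n s w0 \<omega>"

lemma grads_Suc_append: "\<exists>ys. applied_grads (Suc t) = applied_grads t @ ys \<and> ys \<noteq> []"
proof -
  obtain Z w gs where state: "cyc_state \<gamma> G n s w0 \<omega> t = (Z, w, gs)" by (cases "cyc_state \<gamma> G n s w0 \<omega> t")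
  obtain i L where "filter (in_group n s t) [0..<n] = i # L"
    using served_groups_nonempty[OF n s, of t] by (cases "filter (in_group n s t) [0..<n]") auto
  then show ?thesis unfolding cyc_state_Suc[OF state] Let_def state by simp
qed

lemmas length_grads = appending_chain(1)[of applied_grads, OF grads_Suc_append]
lemmas nth_grads = appending_chain(2)[of applied_grads, OF grads_Suc_append]

lemma cyc_grad_seq_eq: "k < length (applied_grads t) \<Longrightarrow> cyc_grad_seq \<gamma> G n s w0 \<omega> k = applied_grads t ! k"
  using length_grads[of "Suc k"] nth_grads[of t "max t (Suc k)" k] nth_grads[of "Suc k" "max t (Suc k)" k]
  by (simp add: cyc_grad_seq_def)

lemma main_branch_eq: "k \<le> length (applied_grads t) \<Longrightarrow> branch k = w0 - \<gamma> *\<^sub>R sum_list (take k (applied_grads t))"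
proof (induction k)
  case (Suc k)
  then have "take (Suc k) (applied_grads t) = take k (applied_grads t) @ [applied_grads t ! k]" by (simp add: take_Suc_conv_app_nth)
  with Suc show ?case by (simp add: cyc_grad_seq_eq scaleR_add_right)
qed simp

definition workers_sim :: "(nat \<Rightarrow> 'a \<times> 'a list) \<Rightarrow> (nat \<Rightarrow> nat \<times> nat list) \<Rightarrow> bool" where
  "workers_sim Z W \<longleftrightarrow> (\<forall>i<n. length (snd (Z i)) = length (snd (W i))
     \<and> fst (Z i) = branch (fst (W i)) - \<gamma> *\<^sub>R sum_list (snd (Z i))
     \<and> (\<forall>j<length (snd (Z i)).
          snd (Z i) ! j = G (branch (fst (W i)) - \<gamma> *\<^sub>R sum_list (take j (snd (Z i)))) (\<omega> (snd (W i) ! j))))"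

definition applied_sim :: "'a list \<Rightarrow> (nat \<times> nat \<times> nat) list \<Rightarrow> bool" where
  "applied_sim gs A \<longleftrightarrow> length gs = length A \<and> (\<forall>k<length A.
     gs ! k = G (branch k - branch (fst (snd (A ! k))) + branch (fst (A ! k))) (\<omega> (snd (snd (A ! k)))))"

lemma workers_sim_local_step:
  assumes "workers_sim Z W"
  shows "workers_sim
    (\<lambda>i. (fst (Z i) - \<gamma> *\<^sub>R G (fst (Z i)) (\<omega> (t * n + i)), snd (Z i) @ [G (fst (Z i)) (\<omega> (t * n + i))]))
    (\<lambda>i. (fst (W i), snd (W i) @ [t * n + i]))"
  unfolding workers_sim_def fst_conv snd_conv
proof (intro allI impI conjI)
  fix i assume "i < n"
  with assms have len: "length (snd (Z i)) = length (snd (W i))"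
    and pt: "fst (Z i) = branch (fst (W i)) - \<gamma> *\<^sub>R sum_list (snd (Z i))"
    and pending: "\<And>j. j < length (snd (Z i)) \<Longrightarrow>
      snd (Z i) ! j = G (branch (fst (W i)) - \<gamma> *\<^sub>R sum_list (take j (snd (Z i)))) (\<omega> (snd (W i) ! j))"
    unfolding workers_sim_def by blast+
  let ?g = "G (fst (Z i)) (\<omega> (t * n + i))"
  show "length (snd (Z i) @ [?g]) = length (snd (W i) @ [t * n + i])" using len by simp
  show "fst (Z i) - \<gamma> *\<^sub>R ?g = branch (fst (W i)) - \<gamma> *\<^sub>R sum_list (snd (Z i) @ [?g])"
    using pt by (simp add: scaleR_add_right)
  fix j assume "j < length (snd (Z i) @ [?g])"
  then consider "j < length (snd (Z i))" | "j = length (snd (Z i))" by fastforce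
  then show "(snd (Z i) @ [?g]) ! j
    = G (branch (fst (W i)) - \<gamma> *\<^sub>R sum_list (take j (snd (Z i) @ [?g]))) (\<omega> ((snd (W i) @ [t * n + i]) ! j))"
  proof cases
    case 1
    then show ?thesis using pending len by (simp add: nth_append)
  next
    case 2
    then show ?thesis using pt len by (simp add: nth_append)
  qed
qed

lemma branch_diff:
  assumes "\<And>k. k \<le> length zs \<Longrightarrow> branch k = w0 - \<gamma> *\<^sub>R sum_list (take k zs)" and "p + j \<le> length zs"
  shows "branch (p + j) - branch p = - (\<gamma> *\<^sub>R sum_list (take j (drop p zs)))"
  using assms(1)[of "p + j"] assms(1)[of p] assms(2) by (simp add: take_add scaleR_add_right)

lemma applied_sim_batch:
  assumes workers: "workers_sim Z W" and applied: "applied_sim gs A" and "set L \<subseteq> {..<n}"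
    and x_eq: "\<And>k. k \<le> length (gs @ concat (map (\<lambda>i. snd (Z i)) L))
              \<Longrightarrow> branch k = w0 - \<gamma> *\<^sub>R sum_list (take k (gs @ concat (map (\<lambda>i. snd (Z i)) L)))"
  shows "applied_sim (gs @ concat (map (\<lambda>i. snd (Z i)) L)) (A @ tag_batch (length A) W L)"
proof -
  let ?sent = "concat (map (\<lambda>i. snd (Z i)) L)"
  have len_Z: "length (snd (Z i)) = length (snd (W i))" if "i \<in> set L" for i
    using workers that assms(3) unfolding workers_sim_def by auto
  then have "length ?sent = length (tag_batch (length A) W L)"
    by (simp add: length_concat length_tag_batch comp_def cong: map_cong)
  with applied have len: "length (gs @ ?sent) = length (A @ tag_batch (length A) W L)"
    by (simp add: applied_sim_def)
  have "(gs @ ?sent) ! k = G (branch k - branch (fst (snd ((A @ tag_batch (length A) W L) ! k)))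
      + branch (fst ((A @ tag_batch (length A) W L) ! k))) (\<omega> (snd (snd ((A @ tag_batch (length A) W L) ! k))))"
    if k: "k < length (A @ tag_batch (length A) W L)" for k
  proof (cases "k < length A")
    case True
    then show ?thesis using applied by (simp add: applied_sim_def nth_append)
  next
    case False
    have gs: "length gs = length A" using applied by (simp add: applied_sim_def)
    have q_lt: "k - length A < length ?sent" using k len False gs by simp
    obtain L\<^sub>1 i L\<^sub>2 j where L: "L = L\<^sub>1 @ i # L\<^sub>2" and j: "j < length (snd (Z i))"
      and q: "k - length A = length (concat (map (\<lambda>i. snd (Z i)) L\<^sub>1)) + j"
      and tag: "tag_batch (length A) W L ! (k - length A)
        = (fst (W i), length A + length (concat (map (\<lambda>i. snd (Z i)) L\<^sub>1)), snd (W i) ! j)"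
      by (rule nth_tag_batch[of L "\<lambda>i. snd (Z i)" W "k - length A" "length A", OF _ q_lt])
        (use len_Z in auto)
    let ?off = "length (concat (map (\<lambda>i. snd (Z i)) L\<^sub>1))"
    have "i < n" using L assms(3) by auto
    then have grad: "snd (Z i) ! j
        = G (branch (fst (W i)) - \<gamma> *\<^sub>R sum_list (take j (snd (Z i)))) (\<omega> (snd (W i) ! j))"
      using workers j unfolding workers_sim_def by blast
    have "k = length gs + ?off + j" using False q gs by simp
    moreover have "length gs + ?off + j \<le> length (gs @ ?sent)" using k len \<open>k = _\<close> by simp
    ultimately have "branch k - branch (length A + ?off) = - (\<gamma> *\<^sub>R sum_list (take j (snd (Z i))))"
      using branch_diff[OF x_eq] gs L j by simp
    then have eq: "branch (fst (W i)) - \<gamma> *\<^sub>R sum_list (take j (snd (Z i)))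
        = branch k - branch (length A + ?off) + branch (fst (W i))"
      by (simp add: algebra_simps)
    show ?thesis
      using False tag grad q gs L j by (simp add: nth_append eq)
  qed
  with len show ?thesis by (simp add: applied_sim_def)
qed

lemma workers_sim_reset:
  assumes "workers_sim Z W"
  shows "workers_sim (\<lambda>i. if in_group n s t i then (branch p, []) else Z i)
                     (\<lambda>i. if in_group n s t i then (p, []) else W i)"
  using assms by (simp add: workers_sim_def)

definition cyc_sim :: "nat \<Rightarrow> bool" where
  "cyc_sim t \<longleftrightarrow> workers_sim (fst (cyc_state \<gamma> G n s w0 \<omega> t)) (fst (cyc_tags n s t))
     \<and> applied_sim (applied_grads t) (snd (cyc_tags n s t))
     \<and> fst (snd (cyc_state \<gamma> G n s w0 \<omega> t)) = w0 - \<gamma> *\<^sub>R sum_list (applied_grads t)"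

lemma cyc_sim_invariant: "cyc_sim t"
proof (induction t)
  case 0
  show ?case by (simp add: cyc_sim_def workers_sim_def applied_sim_def)
next
  case (Suc t)
  obtain Z w gs where state: "cyc_state \<gamma> G n s w0 \<omega> t = (Z, w, gs)" by (cases "cyc_state \<gamma> G n s w0 \<omega> t")
  obtain W A where tags: "cyc_tags n s t = (W, A)" by (cases "cyc_tags n s t")
  define Z1 where "Z1 = (\<lambda>i. (fst (Z i) - \<gamma> *\<^sub>R G (fst (Z i)) (\<omega> (t * n + i)),
                               snd (Z i) @ [G (fst (Z i)) (\<omega> (t * n + i))]))"
  define W1 where "W1 = (\<lambda>i. (fst (W i), snd (W i) @ [t * n + i]))"
  define L where "L = filter (in_group n s t) [0..<n]"
  define sent where "sent = concat (map (\<lambda>i. snd (Z1 i)) L)"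
  define p where "p = length A + length (tag_batch (length A) W1 L)"
  have state': "cyc_state \<gamma> G n s w0 \<omega> (Suc t)
      = ((\<lambda>i. if in_group n s t i then (w - \<gamma> *\<^sub>R sum_list sent, []) else Z1 i),
         w - \<gamma> *\<^sub>R sum_list sent, gs @ sent)"
    by (simp only: cyc_state_Suc[OF state] Let_def Z1_def L_def sent_def)
  have tags': "cyc_tags n s (Suc t)
      = ((\<lambda>i. if in_group n s t i then (p, []) else W1 i), A @ tag_batch (length A) W1 L)"
    by (simp only: cyc_tags_Suc[OF tags] Let_def W1_def L_def p_def)
  have IH: "workers_sim Z W" "applied_sim gs A" "w = w0 - \<gamma> *\<^sub>R sum_list gs"
    using Suc.IH unfolding cyc_sim_def state tags by simp_all
  have Z1: "workers_sim Z1 W1"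
    unfolding Z1_def W1_def by (rule workers_sim_local_step[OF IH(1)])
  have x_eq: "branch k = w0 - \<gamma> *\<^sub>R sum_list (take k (gs @ sent))" if "k \<le> length (gs @ sent)" for k
    using main_branch_eq[of k "Suc t"] that unfolding state' by simp
  have applied: "applied_sim (gs @ sent) (A @ tag_batch (length A) W1 L)"
    using Z1 IH(2) x_eq unfolding sent_def by (intro applied_sim_batch) (auto simp: L_def)
  then have "p = length (gs @ sent)" by (simp add: applied_sim_def p_def)
  then have xp: "branch p = w - \<gamma> *\<^sub>R sum_list sent"
    using x_eq[of "length (gs @ sent)"] IH(3) by (simp add: scaleR_add_right)
  show ?case
    using workers_sim_reset[OF Z1, of t p, unfolded xp] applied IH(3)
    unfolding cyc_sim_def state' tags' by (simp add: scaleR_add_right)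
qed

lemma main_branch_Suc:
  "branch (Suc k) = branch k - \<gamma> *\<^sub>R G (branch k - branch (batch_pos n s k) + branch (reset_pos n s k)) (\<omega> (sample_index n s k))"
proof -
  have k: "k < length (snd (cyc_tags n s (Suc k)))" using length_cyc_tags[OF n s, of "Suc k"] by simp
  moreover have "applied_sim (applied_grads (Suc k)) (snd (cyc_tags n s (Suc k)))"
    using cyc_sim_invariant[of "Suc k"] by (simp add: cyc_sim_def)
  ultimately have "applied_grads (Suc k) ! k = G (branch k - branch (batch_pos n s k) + branch (reset_pos n s k)) (\<omega> (sample_index n s k))"
    by (simp add: applied_sim_def nth_cyc_tags_eq[OF n s k])
  moreover have "k < length (applied_grads (Suc k))" using length_grads[of "Suc k"] by simp
  ultimately show ?thesis by (simp add: cyc_grad_seq_eq)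
qed

end

lemma main_branch_delayed_sgd:
  assumes "smooth_stochastic_gradient gf G D \<sigma> f L fstar" "1 \<le> n" "1 \<le> s" "0 \<le> \<gamma>"
  shows "delayed_sgd gf G D \<sigma> f L fstar \<gamma> (reset_pos n s) (batch_pos n s) (sample_index n s)
           (num_groups n s * n) (\<lambda>k \<omega>. main_branch \<gamma> G n s w0 \<omega> k) w0"
  by (intro delayed_sgd.intro[OF assms(1)] delayed_sgd_axioms.intro)
    (simp_all add: assms(4) cyc_delays[OF assms(2,3)] less_imp_le inj_sample_index[OF assms(2,3)]
      main_branch_Suc[OF assms(2,3)] del: main_branch.simps(2))

section \<open>Step size\<close>

lemma cycle_stepsize_bounds:
  fixes n s :: nat and L \<sigma> \<epsilon> :: real
  assumes "1 \<le> n" "1 \<le> s" "0 < L" "0 < \<epsilon>"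
  defines "\<gamma> \<equiv> cycle_stepsize n s L \<sigma> \<epsilon>"
  shows "0 < \<gamma>" "\<gamma> * (4 * real n ^ 2 * L / real s) \<le> 1" "\<gamma> * (4 * \<sigma>\<^sup>2 * L / \<epsilon>) \<le> 1"
    and "\<gamma> * (4 * real n ^ 2 * L / real s) = 1 \<or> \<gamma> * (4 * \<sigma>\<^sup>2 * L / \<epsilon>) = 1"
proof -
  define a where "a = real s / (4 * real n ^ 2 * L)"
  define b where "b = \<epsilon> / (4 * \<sigma>\<^sup>2 * L)"
  have "0 < a" and u: "\<gamma> * (4 * real n ^ 2 * L / real s) = \<gamma> / a"
    using assms by (simp_all add: a_def field_simps)
  consider "\<sigma>\<^sup>2 = 0" "\<gamma> = a" | "0 < \<sigma>\<^sup>2" "\<gamma> = min a b" "0 < b" "\<gamma> * (4 * \<sigma>\<^sup>2 * L / \<epsilon>) = \<gamma> / b"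
    using assms by (cases "\<sigma>\<^sup>2 = 0") (auto simp: \<gamma>_def cycle_stepsize_def a_def b_def field_simps)
  then have "0 < \<gamma> \<and> \<gamma> / a \<le> 1 \<and> \<gamma> * (4 * \<sigma>\<^sup>2 * L / \<epsilon>) \<le> 1
      \<and> (\<gamma> / a = 1 \<or> \<gamma> * (4 * \<sigma>\<^sup>2 * L / \<epsilon>) = 1)"
  proof cases
    case 1
    then show ?thesis using \<open>0 < a\<close> by simp
  next
    case 2
    then show ?thesis using \<open>0 < a\<close> by (auto simp: min_def)
  qed
  then show "0 < \<gamma>" "\<gamma> * (4 * real n ^ 2 * L / real s) \<le> 1" "\<gamma> * (4 * \<sigma>\<^sup>2 * L / \<epsilon>) \<le> 1"
    and "\<gamma> * (4 * real n ^ 2 * L / real s) = 1 \<or> \<gamma> * (4 * \<sigma>\<^sup>2 * L / \<epsilon>) = 1"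
    unfolding u by blast+
qed

lemma descent_coeff_lower_bound:
  fixes u v :: real
  assumes "0 < u" "u \<le> 1" "0 \<le> v" "v \<le> 1" "u = 1 \<or> v = 1"
  shows "1 / (2 * (u + v)) + v / 4 \<le> descent_coeff u"
  using assms(5)
proof
  assume "u = 1"
  have "v * v \<le> v" using assms(3,4) by (simp add: mult_left_le_one_le)
  then have "1 / (2 * (1 + v)) + v / 4 \<le> 1/2" using assms(3) by (simp add: field_simps)
  then show ?thesis using \<open>u = 1\<close> by (simp add: descent_coeff_def)
next
  assume "v = 1"
  have "u\<^sup>2 \<le> 1" using assms(1,2) by (simp add: power_le_one)
  then have q: "0 < 4 - 3 * u\<^sup>2" by linarith
  have "(u - 1) * (3 * u\<^sup>2 - 2 * u - 4) \<ge> 0"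
    using assms(1,2) \<open>u\<^sup>2 \<le> 1\<close> by (intro mult_nonpos_nonpos) auto
  then have "(u + 3) * (2 * (4 - 3 * u\<^sup>2)) \<le> (8 - 7 * u) * (4 * (u + 1))"
    by (simp add: algebra_simps power2_eq_square)
  then have "(u + 3) / (4 * (u + 1)) \<le> (8 - 7 * u) / (2 * (4 - 3 * u\<^sup>2))"
    using assms(1) q by (simp add: divide_simps)
  moreover have "1 / (2 * (u + 1)) + 1 / 4 = (u + 3) / (4 * (u + 1))" using assms(1) by (simp add: field_simps)
  ultimately show ?thesis using \<open>v = 1\<close> by (simp add: descent_coeff_def)
qed

lemma num_groups_mult_le: "1 \<le> s \<Longrightarrow> s \<le> n \<Longrightarrow> real (num_groups n s * n) * real s \<le> 2 * real n ^ 2"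
proof -
  assume "1 \<le> s" "s \<le> n"
  then have "num_groups n s * s \<le> 2 * n" using num_groups_mult_bounds(2)[of s n] by linarith
  then have "num_groups n s * n * s \<le> 2 * n * n" by (metis mult.commute mult.left_commute mult_le_mono1)
  then have "real (num_groups n s * n * s) \<le> real (2 * n * n)" by (simp only: of_nat_le_iff)
  then show ?thesis by (simp add: power2_eq_square)
qed

lemma cycle_stepsize_delay_bounds:
  fixes n s :: nat and L \<sigma> \<epsilon> :: real
  assumes "1 \<le> n" "1 \<le> s" "s \<le> n" "0 < L" "0 < \<epsilon>"
  defines "\<gamma> \<equiv> cycle_stepsize n s L \<sigma> \<epsilon>"
  defines "u \<equiv> \<gamma> * (4 * real n ^ 2 * L / real s)"
  shows "0 < \<gamma>" "0 < u" "u \<le> 1" "2 * \<gamma> * L * real (num_groups n s * n) \<le> u" "4 * \<gamma> * L \<le> u"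
proof -
  show "0 < \<gamma>" "u \<le> 1"
    using cycle_stepsize_bounds[OF assms(1,2,4,5), of \<sigma>] unfolding \<gamma>_def u_def by auto
  have s: "0 < real s" using assms(2) by simp
  show "0 < u" using \<open>0 < \<gamma>\<close> assms s unfolding u_def by simp
  have "2 * real (num_groups n s * n) * real s \<le> 4 * real n ^ 2"
    using num_groups_mult_le[OF assms(2,3)] by (simp add: algebra_simps)
  then have "2 * real (num_groups n s * n) \<le> 4 * real n ^ 2 / real s" using s by (simp add: field_simps)
  from mult_left_mono[OF this, of "\<gamma> * L"] \<open>0 < \<gamma>\<close> assms(4)
  show "2 * \<gamma> * L * real (num_groups n s * n) \<le> u" by (simp add: u_def field_simps)
  have "real s \<le> real n ^ 2"
    using assms(1,3) by (metis le_trans mult_le_mono2 mult_1_right power2_eq_square of_nat_le_iff of_nat_power)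
  then have "4 \<le> 4 * real n ^ 2 / real s" using s by (simp add: field_simps)
  from mult_left_mono[OF this, of "\<gamma> * L"] \<open>0 < \<gamma>\<close> assms(4)
  show "4 * \<gamma> * L \<le> u" by (simp add: u_def field_simps)
qed

lemma cycle_stepsize_sufficient:
  fixes n s K :: nat and L \<sigma> \<epsilon> \<Delta> :: real
  assumes "1 \<le> n" "1 \<le> s" "0 < L" "0 < \<epsilon>" "0 \<le> \<Delta>"
    and K: "real K \<ge> 8 * real n ^ 2 * L * \<Delta> / (real s * \<epsilon>) + 8 * \<sigma>\<^sup>2 * L * \<Delta> / \<epsilon>\<^sup>2"
  defines "\<gamma> \<equiv> cycle_stepsize n s L \<sigma> \<epsilon>"
  defines "u \<equiv> \<gamma> * (4 * real n ^ 2 * L / real s)"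
  shows "\<Delta> + real K * (L * \<gamma>\<^sup>2 * \<sigma>\<^sup>2) \<le> \<gamma> * descent_coeff u * (real K * \<epsilon>)"
proof -
  define v where "v = \<gamma> * (4 * \<sigma>\<^sup>2 * L / \<epsilon>)"
  have step: "0 < \<gamma>" "u \<le> 1" "v \<le> 1" "u = 1 \<or> v = 1"
    using cycle_stepsize_bounds[OF assms(1-4), of \<sigma>] unfolding \<gamma>_def u_def v_def by auto
  have s: "0 < real s" using assms(2) by simp
  have "0 < u" "0 \<le> v" using step(1) assms s by (simp_all add: u_def v_def)
  with step have c: "1 / (2 * (u + v)) + v / 4 \<le> descent_coeff u"
    by (intro descent_coeff_lower_bound) auto
  have "\<epsilon> * \<gamma> * (8 * real n ^ 2 * L * \<Delta> / (real s * \<epsilon>) + 8 * \<sigma>\<^sup>2 * L * \<Delta> / \<epsilon>\<^sup>2) = 2 * \<Delta> * (u + v)"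
    using assms(4) s by (simp add: u_def v_def field_simps power2_eq_square)
  with K step(1) assms(4) have "2 * \<Delta> * (u + v) \<le> \<epsilon> * \<gamma> * real K"
    by (metis mult_left_mono mult_pos_pos less_imp_le)
  then have "\<Delta> \<le> \<gamma> * real K * \<epsilon> * (1 / (2 * (u + v)))"
    using \<open>0 < u\<close> \<open>0 \<le> v\<close> by (simp add: field_simps)
  moreover have "real K * (L * \<gamma>\<^sup>2 * \<sigma>\<^sup>2) = \<gamma> * real K * \<epsilon> * (v / 4)"
    using assms(4) by (simp add: v_def power2_eq_square)
  moreover have "\<gamma> * real K * \<epsilon> * (1 / (2 * (u + v))) + \<gamma> * real K * \<epsilon> * (v / 4)
      \<le> \<gamma> * real K * \<epsilon> * descent_coeff u"
    using mult_left_mono[OF c, of "\<gamma> * real K * \<epsilon>"] step(1) assms(4) by (simp add: distrib_left)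
  moreover have "\<gamma> * real K * \<epsilon> * descent_coeff u = \<gamma> * descent_coeff u * (real K * \<epsilon>)"
    by (simp add: ac_simps)
  ultimately show ?thesis by linarith
qed

theorem theoremE5:
  fixes f :: "'a::euclidean_space \<Rightarrow> real" and gf :: "'a \<Rightarrow> 'a"
    and G :: "'a \<Rightarrow> 'b \<Rightarrow> 'a" and D :: "'b measure"
    and L \<sigma> fstar \<epsilon> :: real and n s K :: nat and w0 :: 'a
  assumes grad: "\<And>x. (f has_derivative (\<lambda>h. gf x \<bullet> h)) (at x)"
    and lip: "\<And>x y. norm (gf x - gf y) \<le> L * norm (x - y)"
    and lower: "\<And>x. fstar \<le> f x"
    and D: "prob_space D"
    and meas: "(\<lambda>(x, \<xi>). G x \<xi>) \<in> borel_measurable (borel \<Otimes>\<^sub>M D)"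
    and unbiased: "\<And>x. integrable D (G x) \<and> (\<integral>\<xi>. G x \<xi> \<partial>D) = gf x"
    and var: "\<And>x. integrable D (\<lambda>\<xi>. (norm (G x \<xi> - gf x))\<^sup>2)
                   \<and> (\<integral>\<xi>. (norm (G x \<xi> - gf x))\<^sup>2 \<partial>D) \<le> \<sigma>\<^sup>2"
    and n: "1 \<le> n" and s: "1 \<le> s" "s \<le> n"
    and eps: "\<epsilon> > 0"
    and K: "real K \<ge> 8 * real n ^ 2 * L * (f w0 - fstar) / (real s * \<epsilon>)
                     + 8 * \<sigma>\<^sup>2 * L * (f w0 - fstar) / \<epsilon>\<^sup>2"
  shows "(\<Sum>k<K. \<integral>\<^sup>+ \<omega>. ennreal ((norm (gf (main_branch (cycle_stepsize n s L \<sigma> \<epsilon>) G n s w0 \<omega> k)))\<^sup>2)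
                 \<partial>(PiM UNIV (\<lambda>_::nat. D)))
           / ennreal (real K) \<le> ennreal \<epsilon>"
proof -
  have sgd: "smooth_stochastic_gradient gf G D \<sigma> f L fstar"
    unfolding smooth_stochastic_gradient_def smooth_stochastic_gradient_axioms_def stochastic_gradient_def
    using D meas unbiased var grad lip lower by blast
  consider "L = 0" | "0 < L" using lipschitz_constant_nonneg[OF lip] by linarith
  then show ?thesis
  proof cases
    case 1
    then have "gf x = 0" for x using norm_grad_sq_le[OF grad lip lower] by simp
    then show ?thesis by simp
  next
    case 2
    note step = cycle_stepsize_delay_bounds[OF n s 2 eps, of \<sigma>] cycle_stepsize_sufficient[OF n s(1) 2 eps _ K]
      lower[of w0]
    interpret delayed_sgd gf G D \<sigma> f L fstar "cycle_stepsize n s L \<sigma> \<epsilon>" "reset_pos n s" "batch_pos n s"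
      "sample_index n s" "num_groups n s * n" "\<lambda>k \<omega>. main_branch (cycle_stepsize n s L \<sigma> \<epsilon>) G n s w0 \<omega> k" w0
      using main_branch_delayed_sgd[OF sgd n s(1)] step by simp
    show ?thesis using average_E_grad_sq_le step by simp
  qed
qed

end
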